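(* Let $d\ge1$ and consider the linear operator $L\rho=-\partial_Q(V'\rho)+\tfrac12\partial_Q^2\rho$ with $V(Q)=Q^4/4-\mu Q^2/2+\nu Q$ ($\mu,\nu\in\mathbb{R}$), acting from $\mathbb{H}^2_1(\mathbb{R};\mathbb{R})$ to $\mathbb{L}^2_1(\mathbb{R};\mathbb{R})$, with eigenvalues $0=\lambda_1>\lambda_2>\lambda_3>\dots$ and eigenfunctions $\phi_1,\phi_2,\dots$ orthonormal with respect to $\langle\cdot,\cdot\rangle_1$, and let $M(t)=e^{tL}$, $t\ge0$. Let $\rho_1,\dots,\rho_d\in\mathbb{L}^2_1(\mathbb{R};\mathbb{R})$ with $\int_\mathbb{R}\rho_j\,dQ=1$, and assume the $d\times d$ matrices $T_{\mathrm{lin}}=(\langle\phi_\ell,\rho_j\rangle_1)_{\ell,j=1}^d$ and $R_d=(\int_\mathbb{R}Q^{k-1}\phi_\ell(Q)\,dQ)_{k,\ell=1}^d$ are invertible. Define for $t\ge0$ the $d\times d$ matrices $$P_{\mathrm{lin},*}(t)=R_d\,\operatorname{diag}(e^{\lambda_1t},\dots,e^{\lambda_dt})\,T_{\mathrm{lin}},\qquad [P_{\mathrm{lin}}(t)]_{k,j}=\int_\mathbb{R}Q^{k-1}[M(t)\rho_j](Q)\,dQ,$$ and $\Phi_{\mathrm{lin},*}(\delta)=T_{\mathrm{lin}}^{-1}\operatorname{diag}(e^{\lambda_1\delta},\dots,e^{\lambda_d\delta})T_{\mathrm{lin}}$. Fix $\delta\ge0$. Then there exist $t_0\ge0$ and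 $C>0$ such that for all $t_{\mathrm{skip}}>t_0$ the matrix $P_{\mathrm{lin}}(t_{\mathrm{skip}})$ is invertible and, with $\Phi_{\mathrm{lin},t_{\mathrm{skip}}}(\delta)=P_{\mathrm{lin}}(t_{\mathrm{skip}})^{-1}P_{\mathrm{lin}}(t_{\mathrm{skip}}+\delta)$, $$\|\Phi_{\mathrm{lin},*}(\delta)-\Phi_{\mathrm{lin},t_{\mathrm{skip}}}(\delta)\|\le C\exp\bigl((\lambda_{d+1}-\lambda_d)\,t_{\mathrm{skip}}\bigr).$$
   Context: Weighted spaces: $\phi_1(Q)=\exp(-2V(Q))/\int_\mathbb{R}\exp(-2V(q))\,dq$ (the stationary density), $\langle\rho_1,\rho_2\rangle_1=\int_\mathbb{R}\rho_1(Q)\rho_2(Q)/\phi_1(Q)\,dQ$; $\mathbb{L}^2_1(\mathbb{R};\mathbb{R})$ is the space of measurable $u$ with $\int_\mathbb{R}u^2/\phi_1\,dQ<\infty$, and $\mathbb{H}^\ell_1(\mathbb{R};\mathbb{R})$ the space of $u\in\mathbb{L}^2_1$ with $u^{(i)}\in\mathbb{L}^2_1$ for $i\le\ell$. $L$ is the Fokker–Planck operator of the SDE $dQ=-V'(Q)\,dt+dW_t$; it is self-adjoint with respect to $\langle\cdot,\cdot\rangle_1$ with pure point spectrum as stated. $P_{\mathrm{lin}}(t)$ is the lift–evolve–restrict map for the linear lifting $x\mapsto\sum_jx_j\rho_j$ and the moment restriction $\rho\mapsto(\int Q^{k-1}\rho\,dQ)_{k=1}^d$; $P_{\mathrm{lin},*}(t)$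 is the same map with the spectral projection $\rho\mapsto\sum_{j=1}^d\langle\phi_j,\rho\rangle_1\phi_j$ inserted after the lifting. *)

theory Defs
  imports "HOL-Analysis.Analysis" "Jordan_Normal_Form.Gauss_Jordan_Elimination"
begin

definition V :: "real \<Rightarrow> real \<Rightarrow> real \<Rightarrow> real" where
  "V mu nu Q = Q^4 / 4 - mu * Q^2 / 2 + nu * Q"

definition dV :: "real \<Rightarrow> real \<Rightarrow> real \<Rightarrow> real" where
  "dV mu nu Q = Q^3 - mu * Q + nu"

definition phi1 :: "real \<Rightarrow> real \<Rightarrow> real \<Rightarrow> real" where
  "phi1 mu nu Q = exp (- 2 * V mu nu Q) / (LINT q|lborel. exp (- 2 * V mu nu q))"

definition L2_1 :: "real \<Rightarrow> real \<Rightarrow> (real \<Rightarrow> real) \<Rightarrow> bool" where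
  "L2_1 mu nu u \<longleftrightarrow> u \<in> borel_measurable lborel \<and>
     integrable lborel (\<lambda>Q. (u Q)^2 / phi1 mu nu Q)"

definition ip1 :: "real \<Rightarrow> real \<Rightarrow> (real \<Rightarrow> real) \<Rightarrow> (real \<Rightarrow> real) \<Rightarrow> real" where
  "ip1 mu nu r1 r2 = (LINT Q|lborel. r1 Q * r2 Q / phi1 mu nu Q)"

definition norm1 :: "real \<Rightarrow> real \<Rightarrow> (real \<Rightarrow> real) \<Rightarrow> real" where
  "norm1 mu nu u = sqrt (ip1 mu nu u u)"

text \<open>H^2_1 (with classical derivatives): u twice differentiable, u, u', u'' in L^2_1.\<close>
definition H2_1 :: "real \<Rightarrow> real \<Rightarrow> (real \<Rightarrow> real) \<Rightarrow> bool" where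
  "H2_1 mu nu u \<longleftrightarrow> (\<forall>Q. u differentiable at Q) \<and> (\<forall>Q. deriv u differentiable at Q) \<and>
     L2_1 mu nu u \<and> L2_1 mu nu (deriv u) \<and> L2_1 mu nu (deriv (deriv u))"

definition FP_op :: "real \<Rightarrow> real \<Rightarrow> (real \<Rightarrow> real) \<Rightarrow> real \<Rightarrow> real" where
  "FP_op mu nu f Q = - deriv (\<lambda>q. dV mu nu q * f q) Q + 1/2 * deriv (deriv f) Q"

definition spec_partial :: "real \<Rightarrow> real \<Rightarrow> (nat \<Rightarrow> real \<Rightarrow> real) \<Rightarrow> (nat \<Rightarrow> real)
    \<Rightarrow> real \<Rightarrow> (real \<Rightarrow> real) \<Rightarrow> nat \<Rightarrow> real \<Rightarrow> real" where
  "spec_partial mu nu phi lam t rho N =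
     (\<lambda>Q. \<Sum>i\<in>{1..N}. exp (lam i * t) * ip1 mu nu (phi i) rho * phi i Q)"

text \<open>Semigroup M(t) = e^{tL} via the spectral theorem: the L^2_1-limit of the expansion
  (a representative, determined up to null sets).\<close>
definition semigroup :: "real \<Rightarrow> real \<Rightarrow> (nat \<Rightarrow> real \<Rightarrow> real) \<Rightarrow> (nat \<Rightarrow> real)
    \<Rightarrow> real \<Rightarrow> (real \<Rightarrow> real) \<Rightarrow> real \<Rightarrow> real" where
  "semigroup mu nu phi lam t rho = (SOME u. L2_1 mu nu u \<and>
     (\<lambda>N. norm1 mu nu (\<lambda>Q. u Q - spec_partial mu nu phi lam t rho N Q)) \<longlonglongrightarrow> 0)"

text \<open>Matrices (0-based JNF indices; entry (a,b) corresponds to paper indices (a+1,b+1)).\<close>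
definition T_lin :: "nat \<Rightarrow> real \<Rightarrow> real \<Rightarrow> (nat \<Rightarrow> real \<Rightarrow> real) \<Rightarrow> (nat \<Rightarrow> real \<Rightarrow> real) \<Rightarrow> real mat" where
  "T_lin d mu nu phi rho = mat d d (\<lambda>(l, j). ip1 mu nu (phi (l+1)) (rho (j+1)))"

definition R_mat :: "nat \<Rightarrow> (nat \<Rightarrow> real \<Rightarrow> real) \<Rightarrow> real mat" where
  "R_mat d phi = mat d d (\<lambda>(k, l). LINT Q|lborel. Q ^ k * phi (l+1) Q)"

definition exp_diag :: "nat \<Rightarrow> (nat \<Rightarrow> real) \<Rightarrow> real \<Rightarrow> real mat" where
  "exp_diag d lam t = mat d d (\<lambda>(i, j). if i = j then exp (lam (i+1) * t) else 0)"

definition P_lin :: "nat \<Rightarrow> real \<Rightarrow> real \<Rightarrow> (nat \<Rightarrow> real \<Rightarrow> real) \<Rightarrow> (nat \<Rightarrow> real)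
    \<Rightarrow> (nat \<Rightarrow> real \<Rightarrow> real) \<Rightarrow> real \<Rightarrow> real mat" where
  "P_lin d mu nu phi lam rho t = mat d d (\<lambda>(k, j).
     LINT Q|lborel. Q ^ k * semigroup mu nu phi lam t (rho (j+1)) Q)"

definition P_lin_star :: "nat \<Rightarrow> real \<Rightarrow> real \<Rightarrow> (nat \<Rightarrow> real \<Rightarrow> real) \<Rightarrow> (nat \<Rightarrow> real)
    \<Rightarrow> (nat \<Rightarrow> real \<Rightarrow> real) \<Rightarrow> real \<Rightarrow> real mat" where
  "P_lin_star d mu nu phi lam rho t = R_mat d phi * exp_diag d lam t * T_lin d mu nu phi rho"

definition minv :: "real mat \<Rightarrow> real mat" where
  "minv A = the (mat_inverse A)"

definition Phi_star :: "nat \<Rightarrow> real \<Rightarrow> real \<Rightarrow> (nat \<Rightarrow> real \<Rightarrow> real) \<Rightarrow> (nat \<Rightarrow> real)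
    \<Rightarrow> (nat \<Rightarrow> real \<Rightarrow> real) \<Rightarrow> real \<Rightarrow> real mat" where
  "Phi_star d mu nu phi lam rho \<delta> =
     minv (T_lin d mu nu phi rho) * exp_diag d lam \<delta> * T_lin d mu nu phi rho"

definition Phi_skip :: "nat \<Rightarrow> real \<Rightarrow> real \<Rightarrow> (nat \<Rightarrow> real \<Rightarrow> real) \<Rightarrow> (nat \<Rightarrow> real)
    \<Rightarrow> (nat \<Rightarrow> real \<Rightarrow> real) \<Rightarrow> real \<Rightarrow> real \<Rightarrow> real mat" where
  "Phi_skip d mu nu phi lam rho ts \<delta> =
     minv (P_lin d mu nu phi lam rho ts) * P_lin d mu nu phi lam rho (ts + \<delta>)"

text \<open>Frobenius norm (all matrix norms are equivalent in fixed dimension).\<close>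
definition fro_norm :: "real mat \<Rightarrow> real" where
  "fro_norm A = sqrt (\<Sum>i<dim_row A. \<Sum>j<dim_col A. (A $$ (i, j))^2)"

end

(*
  The spectral expansion of the semigroup gives, entrywise,
  P_lin(t) = R_d diag(e^{lambda_i t}) T_lin + O(e^{lambda_{d+1} t}): beyond the first d modes every
  coefficient carries a factor e^{lambda_{d+1} t}, and Bessel's inequality bounds the remaining sum.
  Pulling R_d diag(e^{lambda_i t}) out on the left, P_lin(t) = R_d diag(e^{lambda_i t}) (T_lin + F(t))
  with F(t) = O(e^{(lambda_{d+1} - lambda_d) t}). These outer factors cancel in
  P_lin(t)^{-1} P_lin(t + delta) = (T_lin + F(t))^{-1} diag(e^{lambda_i delta}) (T_lin + F(t + delta)),
  and once F(t) is small, a Neumann-type bound on (T_lin + F(t))^{-1} compares this with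
  Phi_lin,*(delta) = T_lin^{-1} diag(e^{lambda_i delta}) T_lin.
  That the semigroup is well defined at all rests on the completeness of the weighted L^2 space
  (Riesz-Fischer), which follows from the usual fast-Cauchy-subsequence argument.
*)

theory Submission
  imports Defs "HOL-Probability.Distributions" "Jordan_Normal_Form.Determinant"
begin

section \<open>The stationary density\<close>

lemma neg_two_V_le_gaussian: "\<exists>C. \<forall>Q. - 2 * V mu nu Q \<le> C - Q^2 / 2"
proof (intro exI allI)
  fix Q :: real
  define c where "c = \<bar>mu + 1/2\<bar> + 1/2"
  have "(mu + 1/2) * Q^2 \<le> (c - 1/2) * Q^2"
    unfolding c_def by (intro mult_right_mono) auto
  moreover have "0 \<le> (2 * nu + Q)^2" "0 \<le> (Q^2 - c)^2" by simp_all
  moreover have "(Q^2)^2 = Q^4" by (simp flip: power_mult)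
  ultimately show "- 2 * V mu nu Q \<le> (c^2 / 2 + 2 * nu^2) - Q^2 / 2"
    unfolding V_def by (simp add: power2_eq_square algebra_simps)
qed

lemma integrable_moment_exp_neg_two_V: "integrable lborel (\<lambda>Q. Q^n * exp (- 2 * V mu nu Q))"
proof -
  obtain C where C: "\<And>Q. - 2 * V mu nu Q \<le> C - Q^2 / 2"
    using neg_two_V_le_gaussian by blast
  have "integrable lborel (\<lambda>Q. (exp C * sqrt (2 * pi)) * (normal_density 0 1 Q * \<bar>Q - 0\<bar>^n))"
    by (intro integrable_mult_right integrable_normal_moment_abs) simp
  then show ?thesis
  proof (rule Bochner_Integration.integrable_bound)
    show "(\<lambda>Q. Q^n * exp (- 2 * V mu nu Q)) \<in> borel_measurable lborel"
      unfolding V_def by measurable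
    have "abs Q ^ n * exp (- 2 * V mu nu Q) \<le> abs Q ^ n * (exp C * exp (- (Q^2) / 2))" for Q
      using C[of Q] by (intro mult_left_mono) (auto simp flip: exp_add)
    then show "AE Q in lborel. norm (Q^n * exp (- 2 * V mu nu Q))
        \<le> norm ((exp C * sqrt (2 * pi)) * (normal_density 0 1 Q * \<bar>Q - 0\<bar>^n))"
      by (intro AE_I2) (simp add: std_normal_density_def abs_mult power_abs mult_ac)
  qed
qed

lemma phi1_pos: "phi1 mu nu Q > 0"
proof -
  let ?f = "\<lambda>q. exp (- 2 * V mu nu q)"
  have int: "integrable lborel ?f"
    using integrable_moment_exp_neg_two_V[of 0] by simp
  have "(LINT q|lborel. ?f q) \<noteq> 0"
    using integral_nonneg_eq_0_iff_AE[OF int] ae_filter_eq_bot_iff[of lborel]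
    by (simp add: eventually_False)
  moreover have "(LINT q|lborel. ?f q) \<ge> 0"
    by (intro integral_nonneg_AE AE_I2) simp
  ultimately have "(LINT q|lborel. ?f q) > 0"
    by linarith
  then show ?thesis
    unfolding phi1_def by simp
qed

lemma phi1_measurable [measurable]: "phi1 mu nu \<in> borel_measurable borel"
  unfolding phi1_def V_def by measurable

section \<open>The weighted space \<open>L\<^sup>2\<^sub>1\<close> and its completeness\<close>

lemma convergent_of_geometric_weighted_increments:
  fixes x :: "nat \<Rightarrow> real"
  assumes bound: "\<And>k. 2^k * (x (Suc k) - x k)^2 \<le> H"
  shows "convergent x"
proof -
  have "summable (\<lambda>k. x (Suc k) - x k)"
  proof (rule summable_comparison_test)
    show "summable (\<lambda>k. sqrt H * sqrt (1/2)^k)"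
      by (intro summable_mult summable_geometric) (simp add: real_sqrt_lt_1_iff)
    have "(x (Suc k) - x k)^2 \<le> H * (1/2)^k" for k
      using bound[of k] by (simp add: field_simps power_divide)
    then have "\<bar>x (Suc k) - x k\<bar> \<le> sqrt H * sqrt (1/2)^k" for k
      by (metis real_sqrt_abs real_sqrt_le_mono real_sqrt_mult real_sqrt_power)
    then show "\<exists>N. \<forall>k\<ge>N. norm (x (Suc k) - x k) \<le> sqrt H * sqrt (1/2)^k"
      by auto
  qed
  then have "convergent (\<lambda>k. x 0 + (\<Sum>j<k. x (Suc j) - x j))"
    by (intro convergent_add convergent_const) (simp add: summable_iff_convergent)
  then show ?thesis
    using sum_lessThan_telescope[of x] by simp
qed

lemma fast_subseq_of_Cauchy:
  fixes D :: "nat \<Rightarrow> nat \<Rightarrow> real"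
  assumes Cauchy: "\<And>e. e > 0 \<Longrightarrow> \<exists>N. \<forall>m\<ge>N. \<forall>n\<ge>N. D m n \<le> e"
  shows "\<exists>M. incseq M \<and> (\<forall>j n. M j \<le> n \<longrightarrow> D n (M j) \<le> (1/4)^j)"
proof -
  have "\<forall>k. \<exists>N. \<forall>m\<ge>N. \<forall>n\<ge>N. D m n \<le> (1/4)^k"
    using Cauchy by simp
  then obtain N where N: "\<And>k m n. N k \<le> m \<Longrightarrow> N k \<le> n \<Longrightarrow> D m n \<le> (1/4)^k"
    by metis
  define M where "M k = (\<Sum>j\<le>k. N j)" for k
  have "incseq M"
    unfolding M_def incseq_def by (auto intro!: sum_mono2)
  moreover have "N k \<le> M k" for k
    unfolding M_def by (rule member_le_sum) auto
  ultimately show ?thesis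
    using N by (meson order_trans)
qed

locale weighted_L2 =
  fixes mu nu :: real
begin

abbreviation "w \<equiv> phi1 mu nu"
abbreviation "L2 \<equiv> L2_1 mu nu"
abbreviation "ip \<equiv> ip1 mu nu"
abbreviation "nrm \<equiv> norm1 mu nu"

lemma L2D:
  assumes "L2 u"
  shows "u \<in> borel_measurable lborel" "integrable lborel (\<lambda>Q. (u Q)^2 / w Q)"
  using assms unfolding L2_1_def by auto

lemma ip_self: "ip u u = (LINT Q|lborel. (u Q)^2 / w Q)"
  unfolding ip1_def by (simp add: power2_eq_square)

lemma ip_integrable:
  assumes u: "L2 u" and v: "L2 v"
  shows "integrable lborel (\<lambda>Q. u Q * v Q / w Q)"
proof (rule Bochner_Integration.integrable_bound)
  show "integrable lborel (\<lambda>Q. (u Q)^2 / w Q + (v Q)^2 / w Q)"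
    using L2D(2)[OF u] L2D(2)[OF v] by auto
  show "(\<lambda>Q. u Q * v Q / w Q) \<in> borel_measurable lborel"
    using L2D(1)[OF u] L2D(1)[OF v] by measurable
  have "\<bar>u Q * v Q\<bar> \<le> (u Q)^2 + (v Q)^2" for Q
    using sum_squares_bound[of "\<bar>u Q\<bar>" "\<bar>v Q\<bar>"] mult_nonneg_nonneg[of "\<bar>u Q\<bar>" "\<bar>v Q\<bar>"]
    unfolding abs_mult power2_abs by linarith
  then show "AE Q in lborel. norm (u Q * v Q / w Q) \<le> norm ((u Q)^2 / w Q + (v Q)^2 / w Q)"
    using phi1_pos by (intro AE_I2) (simp add: abs_divide divide_right_mono add_divide_distrib[symmetric])
qed

lemma L2_add:
  assumes u: "L2 u" and v: "L2 v"
  shows "L2 (\<lambda>Q. u Q + v Q)"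
proof -
  have "integrable lborel (\<lambda>Q. (u Q)^2 / w Q + (v Q)^2 / w Q + 2 * (u Q * v Q / w Q))"
    using L2D(2)[OF u] L2D(2)[OF v] ip_integrable[OF u v]
    by (intro Bochner_Integration.integrable_add integrable_mult_right)
  moreover have "(\<lambda>Q. (u Q + v Q)^2 / w Q) = (\<lambda>Q. (u Q)^2 / w Q + (v Q)^2 / w Q + 2 * (u Q * v Q / w Q))"
    by (rule ext) (simp add: power2_sum add_divide_distrib)
  moreover have "(\<lambda>Q. u Q + v Q) \<in> borel_measurable lborel"
    using L2D(1)[OF u] L2D(1)[OF v] by measurable
  ultimately show ?thesis
    unfolding L2_1_def by simp
qed

lemma L2_scale:
  assumes "L2 u"
  shows "L2 (\<lambda>Q. c * u Q)"
proof -
  have "integrable lborel (\<lambda>Q. c^2 * ((u Q)^2 / w Q))"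
    using L2D(2)[OF assms] by (rule integrable_mult_right)
  then show ?thesis
    using L2D(1)[OF assms] unfolding L2_1_def by (simp add: power_mult_distrib)
qed

lemma L2_diff: "L2 u \<Longrightarrow> L2 v \<Longrightarrow> L2 (\<lambda>Q. u Q - v Q)"
  using L2_add[of u "\<lambda>Q. - 1 * v Q"] L2_scale[of v "- 1"] by simp

lemma L2_sum: "finite I \<Longrightarrow> (\<And>i. i \<in> I \<Longrightarrow> L2 (f i)) \<Longrightarrow> L2 (\<lambda>Q. \<Sum>i\<in>I. a i * f i Q)"
proof (induction I rule: finite_induct)
  case empty
  then show ?case unfolding L2_1_def by simp
next
  case (insert x F)
  then show ?case
    using L2_add[OF L2_scale[of "f x" "a x"], of "\<lambda>Q. \<Sum>i\<in>F. a i * f i Q"] by auto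
qed

lemma ip_sym: "ip u v = ip v u"
  unfolding ip1_def by (simp add: mult.commute)

lemma ip_add_left:
  assumes "L2 u" "L2 v" "L2 z"
  shows "ip (\<lambda>Q. u Q + v Q) z = ip u z + ip v z"
  unfolding ip1_def using assms ip_integrable
  by (simp add: distrib_right add_divide_distrib Bochner_Integration.integral_add)

lemma ip_scale_left: "ip (\<lambda>Q. c * u Q) z = c * ip u z"
  unfolding ip1_def by (simp add: mult.assoc flip: integral_mult_right_zero)

lemma ip_scale_right: "ip z (\<lambda>Q. c * u Q) = c * ip z u"
  using ip_scale_left ip_sym by metis

lemma ip_diff_left:
  assumes "L2 u" "L2 v" "L2 z"
  shows "ip (\<lambda>Q. u Q - v Q) z = ip u z - ip v z"
  using ip_add_left[OF assms(1) L2_scale[OF assms(2), of "- 1"] assms(3)] ip_scale_left[of "- 1" v z]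
  by simp

lemma ip_diff_right: "L2 u \<Longrightarrow> L2 v \<Longrightarrow> L2 z \<Longrightarrow> ip z (\<lambda>Q. u Q - v Q) = ip z u - ip z v"
  using ip_diff_left ip_sym by metis

lemma ip_sum_left:
  "finite I \<Longrightarrow> (\<And>i. i \<in> I \<Longrightarrow> L2 (f i)) \<Longrightarrow> L2 z \<Longrightarrow>
     ip (\<lambda>Q. \<Sum>i\<in>I. a i * f i Q) z = (\<Sum>i\<in>I. a i * ip (f i) z)"
proof (induction I rule: finite_induct)
  case empty
  then show ?case unfolding ip1_def by simp
next
  case (insert x F)
  then have "ip (\<lambda>Q. a x * f x Q + (\<Sum>i\<in>F. a i * f i Q)) z
      = ip (\<lambda>Q. a x * f x Q) z + ip (\<lambda>Q. \<Sum>i\<in>F. a i * f i Q) z"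
    by (intro ip_add_left L2_scale L2_sum) auto
  with insert show ?case by (simp add: ip_scale_left)
qed

lemma ip_self_nonneg: "ip u u \<ge> 0"
  unfolding ip1_def using phi1_pos
  by (intro integral_nonneg_AE AE_I2) (auto intro!: divide_nonneg_pos)

lemma ip_self_diff_commute: "ip (\<lambda>Q. u Q - v Q) (\<lambda>Q. u Q - v Q) = ip (\<lambda>Q. v Q - u Q) (\<lambda>Q. v Q - u Q)"
  unfolding ip1_def by (simp add: algebra_simps)

lemma nrm_nonneg: "nrm u \<ge> 0"
  unfolding norm1_def using ip_self_nonneg by simp

lemma nrm_le_of_ip_le: "ip u u \<le> c^2 \<Longrightarrow> c \<ge> 0 \<Longrightarrow> nrm u \<le> c"
  unfolding norm1_def by (metis real_sqrt_abs real_sqrt_le_mono abs_of_nonneg)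

lemma nonneg_quadratic_discriminant:
  fixes a b c :: real
  assumes nonneg: "\<And>t. 0 \<le> a - 2 * t * b + t^2 * c" and c: "c \<ge> 0"
  shows "b^2 \<le> a * c"
proof (cases "c = 0")
  case True
  have "b = 0"
    using nonneg[of "(a + 1) / (2 * b)"] nonneg[of 0] True by (cases "b = 0") (auto simp: field_simps)
  then show ?thesis using nonneg[of 0] True by simp
next
  case False
  have "0 \<le> (a - 2 * (b / c) * b + (b / c)^2 * c) * c"
    using mult_nonneg_nonneg[OF nonneg c] .
  also have "\<dots> = a * c - b^2"
    using False by (simp add: power2_eq_square field_simps)
  finally show ?thesis by simp
qed

lemma ip_cauchy_schwarz:
  assumes u: "L2 u" and v: "L2 v"
  shows "\<bar>ip u v\<bar> \<le> nrm u * nrm v"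
proof -
  have "(ip u v)^2 \<le> ip u u * ip v v"
  proof (rule nonneg_quadratic_discriminant[OF _ ip_self_nonneg])
    fix t
    have tv: "L2 (\<lambda>Q. t * v Q)" and d: "L2 (\<lambda>Q. u Q - t * v Q)"
      using u v by (auto intro: L2_scale L2_diff)
    have "0 \<le> ip (\<lambda>Q. u Q - t * v Q) (\<lambda>Q. u Q - t * v Q)"
      by (rule ip_self_nonneg)
    also have "\<dots> = ip u (\<lambda>Q. u Q - t * v Q) - t * ip v (\<lambda>Q. u Q - t * v Q)"
      using u tv d by (simp add: ip_diff_left ip_scale_left)
    also have "ip u (\<lambda>Q. u Q - t * v Q) = ip u u - t * ip u v"
      using u tv by (simp add: ip_diff_right ip_scale_right)
    also have "ip v (\<lambda>Q. u Q - t * v Q) = ip v u - t * ip v v"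
      using u v tv by (simp add: ip_diff_right ip_scale_right)
    finally show "0 \<le> ip u u - 2 * t * ip u v + t^2 * ip v v"
      by (simp add: ip_sym[of v u] power2_eq_square algebra_simps)
  qed
  then show ?thesis
    unfolding norm1_def by (metis real_sqrt_abs real_sqrt_le_mono real_sqrt_mult)
qed

lemma nrm_triangle:
  assumes u: "L2 u" and v: "L2 v"
  shows "nrm (\<lambda>Q. u Q + v Q) \<le> nrm u + nrm v"
proof (rule nrm_le_of_ip_le)
  have "ip (\<lambda>Q. u Q + v Q) (\<lambda>Q. u Q + v Q) = ip u u + 2 * ip u v + ip v v"
  proof -
    have "ip (\<lambda>Q. u Q + v Q) (\<lambda>Q. u Q + v Q) = ip u (\<lambda>Q. u Q + v Q) + ip v (\<lambda>Q. u Q + v Q)"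
      using u v L2_add[OF u v] by (rule ip_add_left)
    also have "ip u (\<lambda>Q. u Q + v Q) = ip u u + ip v u"
      using ip_add_left[OF u v u] by (simp add: ip_sym[of u "\<lambda>Q. u Q + v Q"])
    also have "ip v (\<lambda>Q. u Q + v Q) = ip u v + ip v v"
      using ip_add_left[OF u v v] by (simp add: ip_sym[of v "\<lambda>Q. u Q + v Q"])
    finally show ?thesis by (simp add: ip_sym[of v u])
  qed
  also have "\<dots> \<le> (nrm u)^2 + 2 * (nrm u * nrm v) + (nrm v)^2"
    using ip_cauchy_schwarz[OF u v] ip_self_nonneg[of u] ip_self_nonneg[of v]
    unfolding norm1_def by simp
  also have "\<dots> = (nrm u + nrm v)^2"
    by (simp add: power2_eq_square algebra_simps)
  finally show "ip (\<lambda>Q. u Q + v Q) (\<lambda>Q. u Q + v Q) \<le> (nrm u + nrm v)^2" .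
qed (simp add: nrm_nonneg)

lemma nn_integral_weighted_square:
  assumes "L2 u"
  shows "(\<integral>\<^sup>+Q. ennreal ((u Q)^2 / w Q) \<partial>lborel) = ennreal (ip u u)"
  unfolding ip_self using L2D(2)[OF assms] phi1_pos
  by (intro nn_integral_eq_integral AE_I2) (auto intro!: divide_nonneg_pos)

lemma nn_integral_weighted_increments_finite:
  assumes L: "\<And>k. L2 (T k)"
    and fast: "\<And>k. ip (\<lambda>Q. T (Suc k) Q - T k Q) (\<lambda>Q. T (Suc k) Q - T k Q) \<le> (1/4)^k"
  shows "(\<integral>\<^sup>+Q. (\<Sum>k. ennreal (2^k) * ennreal ((T (Suc k) Q - T k Q)^2 / w Q)) \<partial>lborel) \<noteq> \<infinity>"
proof -
  have DL: "L2 (\<lambda>Q. T (Suc k) Q - T k Q)" for k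
    using L by (intro L2_diff)
  have [measurable]: "T k \<in> borel_measurable lborel" for k
    using L2D(1)[OF L] .
  have sq_meas: "(\<lambda>Q. ennreal ((T (Suc k) Q - T k Q)^2 / w Q)) \<in> borel_measurable lborel" for k
    by measurable
  have "(\<integral>\<^sup>+Q. (\<Sum>k. ennreal (2^k) * ennreal ((T (Suc k) Q - T k Q)^2 / w Q)) \<partial>lborel)
      = (\<Sum>k. \<integral>\<^sup>+Q. ennreal (2^k) * ennreal ((T (Suc k) Q - T k Q)^2 / w Q) \<partial>lborel)"
    by (rule nn_integral_suminf) measurable
  also have "\<dots> = (\<Sum>k. ennreal (2^k) * ennreal (ip (\<lambda>Q. T (Suc k) Q - T k Q) (\<lambda>Q. T (Suc k) Q - T k Q)))"
    by (simp add: nn_integral_cmult[OF sq_meas] nn_integral_weighted_square[OF DL])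
  also have "\<dots> \<le> (\<Sum>k. ennreal ((1/2)^k))"
  proof (intro suminf_le summableI)
    fix k :: nat
    have "2^k * ip (\<lambda>Q. T (Suc k) Q - T k Q) (\<lambda>Q. T (Suc k) Q - T k Q) \<le> 2^k * (1/4)^k"
      using fast[of k] by simp
    also have "\<dots> = (1/2::real)^k"
      by (simp flip: power_mult_distrib)
    finally show "ennreal (2^k) * ennreal (ip (\<lambda>Q. T (Suc k) Q - T k Q) (\<lambda>Q. T (Suc k) Q - T k Q))
        \<le> ennreal ((1/2)^k)"
      by (simp add: ennreal_leI flip: ennreal_mult')
  qed
  also have "\<dots> = ennreal (\<Sum>k. (1/2::real)^k)"
    by (intro suminf_ennreal2 summable_geometric) auto
  finally show ?thesis
    by (auto simp: top_unique)
qed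

lemma L2_AE_convergent_of_fast_Cauchy:
  assumes L: "\<And>k. L2 (T k)"
    and fast: "\<And>k. ip (\<lambda>Q. T (Suc k) Q - T k Q) (\<lambda>Q. T (Suc k) Q - T k Q) \<le> (1/4)^k"
  shows "AE Q in lborel. convergent (\<lambda>k. T k Q)"
proof -
  define h where "h Q = (\<Sum>k. ennreal (2^k) * ennreal ((T (Suc k) Q - T k Q)^2 / w Q))" for Q
  have [measurable]: "T k \<in> borel_measurable lborel" for k
    using L2D(1)[OF L] .
  have "AE Q in lborel. h Q \<noteq> \<infinity>"
    unfolding h_def by (intro nn_integral_PInf_AE[OF _ nn_integral_weighted_increments_finite[OF L fast]]) measurable
  then show ?thesis
  proof eventually_elim
    case (elim Q)
    then obtain H where H: "h Q = ennreal H" "0 \<le> H"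
      by (cases "h Q" rule: ennreal_cases) auto
    have "2^k * (T (Suc k) Q - T k Q)^2 \<le> H * w Q" for k
    proof -
      have "ennreal (2^k) * ennreal ((T (Suc k) Q - T k Q)^2 / w Q) \<le> h Q"
        unfolding h_def
        using sum_le_suminf[of "\<lambda>k. ennreal (2^k) * ennreal ((T (Suc k) Q - T k Q)^2 / w Q)" "{k}"] by auto
      then have "2^k * ((T (Suc k) Q - T k Q)^2 / w Q) \<le> H"
        using H by (simp add: ennreal_le_iff flip: ennreal_mult')
      then show ?thesis
        using phi1_pos[of mu nu Q] by (simp add: field_simps)
    qed
    then show ?case
      by (rule convergent_of_geometric_weighted_increments)
  qed
qed

text \<open>Fatou's lemma, applied to the weighted squares.\<close>
lemma L2_limit_of_AE_limit:
  assumes L: "\<And>k. L2 (T k)" and u [measurable]: "u \<in> borel_measurable lborel"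
    and lim: "AE Q in lborel. (\<lambda>k. T k Q) \<longlonglongrightarrow> u Q"
    and bound: "\<And>k. j \<le> k \<Longrightarrow> ip (\<lambda>Q. T k Q - T j Q) (\<lambda>Q. T k Q - T j Q) \<le> c"
  shows "L2 (\<lambda>Q. u Q - T j Q) \<and> ip (\<lambda>Q. u Q - T j Q) (\<lambda>Q. u Q - T j Q) \<le> c"
proof -
  have [measurable]: "T k \<in> borel_measurable lborel" for k
    using L2D(1)[OF L] .
  have nonneg: "AE Q in lborel. 0 \<le> f Q ^ 2 / w Q" for f
    using phi1_pos by (intro AE_I2) (auto intro!: divide_nonneg_pos)
  have "(\<integral>\<^sup>+Q. ennreal ((u Q - T j Q)^2 / w Q) \<partial>lborel)
      = (\<integral>\<^sup>+Q. liminf (\<lambda>k. ennreal ((T k Q - T j Q)^2 / w Q)) \<partial>lborel)"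
    using lim
  proof (intro nn_integral_cong_AE, eventually_elim)
    case (elim Q)
    have "(\<lambda>k. ennreal ((T k Q - T j Q)^2 / w Q)) \<longlonglongrightarrow> ennreal ((u Q - T j Q)^2 / w Q)"
      using elim phi1_pos[of mu nu Q] by (intro tendsto_ennrealI tendsto_intros) auto
    then show ?case
      by (rule lim_imp_Liminf[symmetric, rotated]) simp
  qed
  also have "\<dots> \<le> liminf (\<lambda>k. \<integral>\<^sup>+Q. ennreal ((T k Q - T j Q)^2 / w Q) \<partial>lborel)"
    by (rule nn_integral_liminf) measurable
  also have "\<dots> \<le> ennreal c"
  proof (rule Liminf_le)
    have "(\<integral>\<^sup>+Q. ennreal ((T k Q - T j Q)^2 / w Q) \<partial>lborel) \<le> ennreal c" if "j \<le> k" for k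
      using nn_integral_weighted_square[OF L2_diff[OF L L]] bound[OF that] by (simp add: ennreal_leI)
    then show "\<forall>\<^sub>F k in sequentially. (\<integral>\<^sup>+Q. ennreal ((T k Q - T j Q)^2 / w Q) \<partial>lborel) \<le> ennreal c"
      unfolding eventually_sequentially by blast
  qed simp
  finally have nn: "(\<integral>\<^sup>+Q. ennreal ((u Q - T j Q)^2 / w Q) \<partial>lborel) \<le> ennreal c" .
  have "integrable lborel (\<lambda>Q. (u Q - T j Q)^2 / w Q)"
    using nn nonneg by (intro integrableI_nonneg) (auto simp: le_less_trans)
  then have L2u: "L2 (\<lambda>Q. u Q - T j Q)"
    unfolding L2_1_def by simp
  have "0 \<le> c"
    using bound[OF order_refl] ip_self_nonneg order_trans by blast
  with nn have "ip (\<lambda>Q. u Q - T j Q) (\<lambda>Q. u Q - T j Q) \<le> c"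
    unfolding ip_self using nonneg by (simp add: integral_eq_nn_integral enn2real_leI)
  with L2u show ?thesis ..
qed

lemma L2_limit_of_fast_Cauchy:
  assumes L: "\<And>k. L2 (T k)"
    and fast: "\<And>j k. j \<le> k \<Longrightarrow> ip (\<lambda>Q. T k Q - T j Q) (\<lambda>Q. T k Q - T j Q) \<le> (1/4)^j"
  shows "\<exists>u. L2 u \<and> (\<forall>j. ip (\<lambda>Q. u Q - T j Q) (\<lambda>Q. u Q - T j Q) \<le> (1/4)^j)"
proof -
  have "AE Q in lborel. convergent (\<lambda>k. T k Q)"
    using L by (rule L2_AE_convergent_of_fast_Cauchy) (simp add: fast)
  then have lim: "AE Q in lborel. (\<lambda>k. T k Q) \<longlonglongrightarrow> lim (\<lambda>k. T k Q)"
    by eventually_elim (simp add: convergent_LIMSEQ_iff)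
  define u where "u Q = lim (\<lambda>k. T k Q)" for Q
  have [measurable]: "T k \<in> borel_measurable lborel" for k
    using L2D(1)[OF L] .
  have u_meas: "u \<in> borel_measurable lborel"
    unfolding u_def by measurable
  have near: "L2 (\<lambda>Q. u Q - T j Q) \<and> ip (\<lambda>Q. u Q - T j Q) (\<lambda>Q. u Q - T j Q) \<le> (1/4)^j" for j
    using L u_meas lim fast unfolding u_def[symmetric] by (rule L2_limit_of_AE_limit)
  have "L2 u"
    using L2_add[OF conjunct1[OF near[of 0]] L[of 0]] by simp
  with near show ?thesis
    by blast
qed

lemma L2_complete:
  assumes L: "\<And>n. L2 (S n)"
    and Cauchy: "\<And>e. e > 0 \<Longrightarrow> \<exists>N. \<forall>m\<ge>N. \<forall>n\<ge>N. ip (\<lambda>Q. S m Q - S n Q) (\<lambda>Q. S m Q - S n Q) \<le> e"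
  shows "\<exists>u. L2 u \<and> (\<lambda>n. nrm (\<lambda>Q. u Q - S n Q)) \<longlonglongrightarrow> 0"
proof -
  obtain M where M: "incseq M"
    "\<And>j n. M j \<le> n \<Longrightarrow> ip (\<lambda>Q. S n Q - S (M j) Q) (\<lambda>Q. S n Q - S (M j) Q) \<le> (1/4)^j"
    using fast_subseq_of_Cauchy[of "\<lambda>m n. ip (\<lambda>Q. S m Q - S n Q) (\<lambda>Q. S m Q - S n Q)"] Cauchy by blast
  define T where "T k = S (M k)" for k
  have TL: "L2 (T k)" for k
    unfolding T_def by (rule L)
  have close: "ip (\<lambda>Q. S n Q - T j Q) (\<lambda>Q. S n Q - T j Q) \<le> (1/4)^j" if "M j \<le> n" for j n
    unfolding T_def using M(2) that .
  have fast: "ip (\<lambda>Q. T k Q - T j Q) (\<lambda>Q. T k Q - T j Q) \<le> (1/4)^j" if "j \<le> k" for j k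
    using close[of j "M k"] incseqD[OF M(1) that] unfolding T_def by simp
  obtain u where u: "L2 u" "\<And>j. ip (\<lambda>Q. u Q - T j Q) (\<lambda>Q. u Q - T j Q) \<le> (1/4)^j"
    using L2_limit_of_fast_Cauchy[OF TL fast] by blast
  have approx: "nrm (\<lambda>Q. u Q - S n Q) \<le> 2 * (1/2)^j" if "M j \<le> n" for j n
  proof -
    have sq: "((1/2::real)^j)^2 = (1/4)^j"
      by (simp add: power2_eq_square flip: power_mult_distrib)
    have "nrm (\<lambda>Q. (u Q - T j Q) + (T j Q - S n Q)) \<le> nrm (\<lambda>Q. u Q - T j Q) + nrm (\<lambda>Q. T j Q - S n Q)"
      using u(1) L TL by (intro nrm_triangle L2_diff) auto
    also have "nrm (\<lambda>Q. u Q - T j Q) \<le> (1/2)^j"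
      using u(2)[of j] sq by (intro nrm_le_of_ip_le) auto
    also have "nrm (\<lambda>Q. T j Q - S n Q) \<le> (1/2)^j"
      using close[OF that] sq ip_self_diff_commute[of "S n" "T j"] by (intro nrm_le_of_ip_le) auto
    finally show ?thesis
      by simp
  qed
  have "(\<lambda>n. nrm (\<lambda>Q. u Q - S n Q)) \<longlonglongrightarrow> 0"
  proof (rule LIMSEQ_I)
    fix r :: real
    assume "r > 0"
    then obtain j where "(1/2::real)^j < r / 2"
      using real_arch_pow_inv[of "r / 2" "1/2"] by auto
    then show "\<exists>n0. \<forall>n\<ge>n0. norm (nrm (\<lambda>Q. u Q - S n Q) - 0) < r"
      using approx nrm_nonneg by (intro exI[of _ "M j"]) force
  qed
  with u(1) show ?thesis
    by blast
qed

lemma moment_weight_L2: "L2 (\<lambda>Q. Q^k * w Q)"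
proof -
  have "(Q^k * w Q)^2 / w Q = Q^(2 * k) * exp (- 2 * V mu nu Q) / (LINT q|lborel. exp (- 2 * V mu nu q))" for Q
    using phi1_pos[of mu nu Q] by (simp add: phi1_def power2_eq_square power_mult field_simps)
  then show ?thesis
    unfolding L2_1_def using integrable_moment_exp_neg_two_V[of "2 * k" mu nu]
    by (simp add: integrable_divide_zero)
qed

lemma ip_moment_weight: "ip (\<lambda>Q. Q^k * w Q) f = (LINT Q|lborel. Q^k * f Q)"
proof -
  have "Q^k * w Q * f Q / w Q = Q^k * f Q" for Q
    using phi1_pos[of mu nu Q] by simp
  then show ?thesis
    unfolding ip1_def by simp
qed

end

section \<open>Spectral expansion of the semigroup\<close>

locale orthonormal_family = weighted_L2 +
  fixes phi :: "nat \<Rightarrow> real \<Rightarrow> real"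
  assumes phi_L2: "\<And>i. i \<ge> 1 \<Longrightarrow> L2 (phi i)"
    and phi_orthonormal: "\<And>i j. i \<ge> 1 \<Longrightarrow> j \<ge> 1 \<Longrightarrow> ip (phi i) (phi j) = (if i = j then 1 else 0)"
begin

lemma L2_expansion: "finite I \<Longrightarrow> I \<subseteq> {1..} \<Longrightarrow> L2 (\<lambda>Q. \<Sum>i\<in>I. a i * phi i Q)"
  by (rule L2_sum) (auto intro!: phi_L2 simp: subset_iff)

lemma ip_expansion_left:
  "finite I \<Longrightarrow> I \<subseteq> {1..} \<Longrightarrow> L2 z \<Longrightarrow>
     ip (\<lambda>Q. \<Sum>i\<in>I. a i * phi i Q) z = (\<Sum>i\<in>I. a i * ip (phi i) z)"
  by (rule ip_sum_left) (auto intro!: phi_L2 simp: subset_iff)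

lemma ip_expansion_expansion:
  assumes I: "finite I" "I \<subseteq> {1..}"
  shows "ip (\<lambda>Q. \<Sum>i\<in>I. a i * phi i Q) (\<lambda>Q. \<Sum>i\<in>I. b i * phi i Q) = (\<Sum>i\<in>I. a i * b i)"
proof -
  have pos: "\<And>k. k \<in> I \<Longrightarrow> 1 \<le> k"
    using I by auto
  have "ip (\<lambda>Q. \<Sum>k\<in>I. b k * phi k Q) (phi i) = b i" if "i \<in> I" for i
  proof -
    have "ip (\<lambda>Q. \<Sum>k\<in>I. b k * phi k Q) (phi i) = (\<Sum>k\<in>I. b k * (if k = i then 1 else 0))"
      using I that pos by (subst ip_expansion_left) (auto intro!: sum.cong phi_L2 simp: phi_orthonormal)
    also have "\<dots> = (\<Sum>k\<in>I. if k = i then b k else 0)"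
      by (intro sum.cong) auto
    also have "\<dots> = b i"
      using I that by simp
    finally show ?thesis .
  qed
  then show ?thesis
    using I by (simp add: ip_expansion_left L2_expansion ip_sym[of "phi _"])
qed

lemma bessel_inequality:
  assumes z: "L2 z"
  shows "(\<Sum>i\<in>{1..N}. (ip (phi i) z)^2) \<le> ip z z"
proof -
  define S where "S = (\<lambda>Q. \<Sum>i\<in>{1..N}. ip (phi i) z * phi i Q)"
  have SL: "L2 S"
    unfolding S_def by (rule L2_expansion) auto
  have Sz: "ip S z = (\<Sum>i\<in>{1..N}. (ip (phi i) z)^2)"
    unfolding S_def using z by (simp add: ip_expansion_left power2_eq_square)
  have SS: "ip S S = (\<Sum>i\<in>{1..N}. (ip (phi i) z)^2)"
    unfolding S_def by (simp add: ip_expansion_expansion power2_eq_square)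
  have "0 \<le> ip (\<lambda>Q. z Q - S Q) (\<lambda>Q. z Q - S Q)"
    by (rule ip_self_nonneg)
  also have "\<dots> = ip z z - 2 * ip S z + ip S S"
    using z SL L2_diff[OF z SL] by (simp add: ip_diff_left ip_diff_right ip_sym[of z S])
  finally show ?thesis
    unfolding Sz SS by simp
qed

lemma ip_partial_sum_diff:
  assumes "n \<le> m"
  shows "ip (\<lambda>Q. (\<Sum>i\<in>{1..m}. a i * phi i Q) - (\<Sum>i\<in>{1..n}. a i * phi i Q))
            (\<lambda>Q. (\<Sum>i\<in>{1..m}. a i * phi i Q) - (\<Sum>i\<in>{1..n}. a i * phi i Q))
         = (\<Sum>i\<in>{1..m}. (a i)^2) - (\<Sum>i\<in>{1..n}. (a i)^2)"
proof -
  have sub: "{1..n} \<subseteq> {1..m}"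
    using assms by auto
  have "(\<Sum>i\<in>{1..m}. f i) - (\<Sum>i\<in>{1..n}. f i) = (\<Sum>i\<in>{1..m} - {1..n}. f i)" for f :: "nat \<Rightarrow> real"
    using sub by (simp add: sum_diff)
  moreover have "finite ({1..m} - {1..n})" "{1..m} - {1..n} \<subseteq> {1..}"
    by auto
  ultimately show ?thesis
    by (simp add: ip_expansion_expansion power2_eq_square)
qed

lemma riesz_fischer:
  assumes bound: "\<And>N. (\<Sum>i\<in>{1..N}. (a i)^2) \<le> B"
  shows "\<exists>u. L2 u \<and> (\<lambda>N. nrm (\<lambda>Q. u Q - (\<Sum>i\<in>{1..N}. a i * phi i Q))) \<longlonglongrightarrow> 0"
proof (rule L2_complete[of "\<lambda>N Q. \<Sum>i\<in>{1..N}. a i * phi i Q"])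
  show "L2 (\<lambda>Q. \<Sum>i\<in>{1..N}. a i * phi i Q)" for N
    by (rule L2_expansion) auto
  define s where "s N = (\<Sum>i\<in>{1..N}. (a i)^2)" for N
  have "incseq s"
    unfolding s_def incseq_def by (auto intro!: sum_mono2)
  then have "s \<longlonglongrightarrow> (SUP N. s N)"
    using bound by (intro LIMSEQ_incseq_SUP bdd_aboveI2) (auto simp: s_def)
  then have "Cauchy s"
    by (rule LIMSEQ_imp_Cauchy)
  fix e :: real
  assume "e > 0"
  then obtain N where N: "\<And>m n. m \<ge> N \<Longrightarrow> n \<ge> N \<Longrightarrow> \<bar>s m - s n\<bar> < e"
    using \<open>Cauchy s\<close> unfolding Cauchy_def dist_real_def by metis
  have "ip (\<lambda>Q. (\<Sum>i\<in>{1..m}. a i * phi i Q) - (\<Sum>i\<in>{1..n}. a i * phi i Q))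
          (\<lambda>Q. (\<Sum>i\<in>{1..m}. a i * phi i Q) - (\<Sum>i\<in>{1..n}. a i * phi i Q)) \<le> e"
    if "m \<ge> N" "n \<ge> N" for m n
  proof (cases "n \<le> m")
    case True
    then show ?thesis
      using N[OF that] ip_partial_sum_diff[OF True, of a] by (simp add: s_def abs_less_iff)
  next
    case False
    then show ?thesis
      using N[OF that] ip_partial_sum_diff[of m n a]
        ip_self_diff_commute[of "\<lambda>Q. \<Sum>i\<in>{1..m}. a i * phi i Q" "\<lambda>Q. \<Sum>i\<in>{1..n}. a i * phi i Q"]
      by (simp add: s_def abs_less_iff)
  qed
  then show "\<exists>N. \<forall>m\<ge>N. \<forall>n\<ge>N.
      ip (\<lambda>Q. (\<Sum>i\<in>{1..m}. a i * phi i Q) - (\<Sum>i\<in>{1..n}. a i * phi i Q))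
         (\<lambda>Q. (\<Sum>i\<in>{1..m}. a i * phi i Q) - (\<Sum>i\<in>{1..n}. a i * phi i Q)) \<le> e"
    by blast
qed

lemma semigroup_L2_limit:
  assumes z: "L2 z" and lam_nonpos: "\<And>i. i \<ge> 1 \<Longrightarrow> lam i \<le> 0" and t: "t \<ge> 0"
  shows "L2 (semigroup mu nu phi lam t z) \<and>
    (\<lambda>N. nrm (\<lambda>Q. semigroup mu nu phi lam t z Q - spec_partial mu nu phi lam t z N Q)) \<longlonglongrightarrow> 0"
proof -
  define a where "a i = exp (lam i * t) * ip (phi i) z" for i
  have "(a i)^2 \<le> (ip (phi i) z)^2" if "i \<ge> 1" for i
  proof -
    have "exp (lam i * t) \<le> 1"
      using lam_nonpos[OF that] t by (simp add: mult_nonpos_nonneg)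
    then show ?thesis
      unfolding a_def power_mult_distrib by (intro mult_left_le_one_le) (auto simp: power_le_one)
  qed
  then have "(\<Sum>i\<in>{1..N}. (a i)^2) \<le> ip z z" for N
    using bessel_inequality[OF z, of N] by (meson atLeastAtMost_iff order_trans sum_mono)
  then obtain u where "L2 u" "(\<lambda>N. nrm (\<lambda>Q. u Q - (\<Sum>i\<in>{1..N}. a i * phi i Q))) \<longlonglongrightarrow> 0"
    using riesz_fischer by blast
  then have "\<exists>u. L2 u \<and> (\<lambda>N. nrm (\<lambda>Q. u Q - spec_partial mu nu phi lam t z N Q)) \<longlonglongrightarrow> 0"
    unfolding spec_partial_def a_def by auto
  then show ?thesis
    unfolding semigroup_def by (rule someI_ex)
qed

lemma ip_semigroup_limit:
  assumes z: "L2 z" and g: "L2 g" and lam_nonpos: "\<And>i. i \<ge> 1 \<Longrightarrow> lam i \<le> 0" and t: "t \<ge> 0"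
  shows "(\<lambda>N. \<Sum>i\<in>{1..N}. exp (lam i * t) * ip (phi i) z * ip g (phi i))
           \<longlonglongrightarrow> ip g (semigroup mu nu phi lam t z)"
proof -
  define U where "U = semigroup mu nu phi lam t z"
  define S where "S N = spec_partial mu nu phi lam t z N" for N
  have U: "L2 U" "(\<lambda>N. nrm (\<lambda>Q. U Q - S N Q)) \<longlonglongrightarrow> 0"
    using semigroup_L2_limit[OF z lam_nonpos t] unfolding U_def S_def by auto
  have SL: "L2 (S N)" for N
    unfolding S_def spec_partial_def by (rule L2_expansion) auto
  have ip_S: "ip g (S N) = (\<Sum>i\<in>{1..N}. exp (lam i * t) * ip (phi i) z * ip g (phi i))" for N
  proof -
    have "ip g (S N) = ip (S N) g"
      by (rule ip_sym)
    also have "\<dots> = (\<Sum>i\<in>{1..N}. exp (lam i * t) * ip (phi i) z * ip (phi i) g)"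
      using g unfolding S_def spec_partial_def by (simp add: ip_expansion_left)
    finally show ?thesis
      by (simp add: ip_sym[of "phi _" g])
  qed
  have "\<bar>ip g U - ip g (S N)\<bar> \<le> nrm g * nrm (\<lambda>Q. U Q - S N Q)" for N
    using ip_cauchy_schwarz[OF g L2_diff[OF U(1) SL]] U(1) SL g by (simp add: ip_diff_right)
  then have "(\<lambda>N. ip g U - ip g (S N)) \<longlonglongrightarrow> 0"
    by (intro Lim_null_comparison[OF always_eventually tendsto_mult_right_zero[OF U(2), where c="nrm g"]])
      auto
  then have "(\<lambda>N. ip g U - (ip g U - ip g (S N))) \<longlonglongrightarrow> ip g U - 0"
    by (intro tendsto_diff tendsto_const)
  then show ?thesis
    unfolding U_def ip_S by simp
qed

lemma semigroup_spectral_tail: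
  assumes z: "L2 z" and g: "L2 g" and t: "t \<ge> 0"
    and lam_antitone: "\<And>i j. 1 \<le> i \<Longrightarrow> i \<le> j \<Longrightarrow> lam j \<le> lam i"
    and lam_nonpos: "\<And>i. i \<ge> 1 \<Longrightarrow> lam i \<le> 0"
  shows "\<bar>ip g (semigroup mu nu phi lam t z) - (\<Sum>i\<in>{1..d}. exp (lam i * t) * ip (phi i) z * ip g (phi i))\<bar>
           \<le> (ip z z + ip g g) / 2 * exp (lam (Suc d) * t)"
proof -
  define a where "a i = exp (lam i * t) * ip (phi i) z * ip g (phi i)" for i
  have tail: "\<bar>(\<Sum>i\<in>{1..N}. a i) - (\<Sum>i\<in>{1..d}. a i)\<bar> \<le> (ip z z + ip g g) / 2 * exp (lam (Suc d) * t)"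
    if "d \<le> N" for N
  proof -
    have "(\<Sum>i\<in>{1..N}. a i) - (\<Sum>i\<in>{1..d}. a i) = (\<Sum>i\<in>{1..N} - {1..d}. a i)"
      using that by (simp add: sum_diff)
    also have "\<bar>\<dots>\<bar> \<le> (\<Sum>i\<in>{1..N} - {1..d}. exp (lam (Suc d) * t) * (((ip (phi i) z)^2 + (ip g (phi i))^2) / 2))"
    proof (rule order_trans[OF sum_abs sum_mono])
      fix i assume i: "i \<in> {1..N} - {1..d}"
      have "exp (lam i * t) \<le> exp (lam (Suc d) * t)"
        using lam_antitone[of "Suc d" i] i t by (auto intro: mult_right_mono)
      moreover have "\<bar>ip (phi i) z * ip g (phi i)\<bar> \<le> ((ip (phi i) z)^2 + (ip g (phi i))^2) / 2"
        using sum_squares_bound[of "\<bar>ip (phi i) z\<bar>" "\<bar>ip g (phi i)\<bar>"] by (simp add: abs_mult)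
      ultimately show "\<bar>a i\<bar> \<le> exp (lam (Suc d) * t) * (((ip (phi i) z)^2 + (ip g (phi i))^2) / 2)"
        unfolding a_def abs_mult mult.assoc by (intro mult_mono) auto
    qed
    also have "\<dots> \<le> exp (lam (Suc d) * t) * (\<Sum>i\<in>{1..N}. ((ip (phi i) z)^2 + (ip (phi i) g)^2) / 2)"
      by (auto simp: ip_sym[of g] sum_distrib_left intro!: sum_mono2)
    also have "\<dots> \<le> exp (lam (Suc d) * t) * ((ip z z + ip g g) / 2)"
      using bessel_inequality[OF z, of N] bessel_inequality[OF g, of N]
      by (intro mult_left_mono) (auto simp: sum.distrib simp flip: sum_divide_distrib)
    finally show ?thesis
      by (simp add: mult.commute)
  qed
  have "(\<lambda>N. \<bar>(\<Sum>i\<in>{1..N}. a i) - (\<Sum>i\<in>{1..d}. a i)\<bar>)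
          \<longlonglongrightarrow> \<bar>ip g (semigroup mu nu phi lam t z) - (\<Sum>i\<in>{1..d}. a i)\<bar>"
    using ip_semigroup_limit[OF z g lam_nonpos t] unfolding a_def by (intro tendsto_intros)
  then show ?thesis
    unfolding a_def[symmetric] using tail by (intro LIMSEQ_le_const2) auto
qed

end

section \<open>Perturbation of the skip propagator\<close>

definition mat_l1_norm :: "real mat \<Rightarrow> real" where
  "mat_l1_norm A = (\<Sum>i<dim_row A. \<Sum>j<dim_col A. \<bar>A $$ (i, j)\<bar>)"

lemma mat_l1_norm_nonneg: "mat_l1_norm A \<ge> 0"
  unfolding mat_l1_norm_def by (intro sum_nonneg) auto

lemma mat_l1_norm_le:
  assumes A: "A \<in> carrier_mat n m" and b: "\<And>i j. i < n \<Longrightarrow> j < m \<Longrightarrow> \<bar>A $$ (i, j)\<bar> \<le> b i j"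
  shows "mat_l1_norm A \<le> (\<Sum>i<n. \<Sum>j<m. b i j)"
  unfolding mat_l1_norm_def using A b by (auto intro!: sum_mono)

lemma mat_l1_norm_diff:
  assumes "A \<in> carrier_mat n m" "B \<in> carrier_mat n m"
  shows "mat_l1_norm (A - B) \<le> mat_l1_norm A + mat_l1_norm B"
proof -
  have "mat_l1_norm (A - B) \<le> (\<Sum>i<n. \<Sum>j<m. \<bar>A $$ (i, j)\<bar> + \<bar>B $$ (i, j)\<bar>)"
    using assms by (intro mat_l1_norm_le) (auto intro: abs_triangle_ineq4)
  then show ?thesis
    using assms unfolding mat_l1_norm_def by (simp add: sum.distrib)
qed

lemma mat_l1_norm_row_le: "i < dim_row A \<Longrightarrow> (\<Sum>j<dim_col A. \<bar>A $$ (i, j)\<bar>) \<le> mat_l1_norm A"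
  unfolding mat_l1_norm_def
  by (rule member_le_sum[of i _ "\<lambda>i. \<Sum>j<dim_col A. \<bar>A $$ (i, j)\<bar>"]) (auto intro: sum_nonneg)

lemma index_mult_mat_sum:
  "A \<in> carrier_mat n m \<Longrightarrow> B \<in> carrier_mat m p \<Longrightarrow> i < n \<Longrightarrow> j < p \<Longrightarrow>
     (A * B) $$ (i, j) = (\<Sum>k<m. A $$ (i, k) * B $$ (k, j))"
  by (auto simp: scalar_prod_def atLeast0LessThan intro!: sum.cong)

lemma mat_l1_norm_mult:
  assumes A: "A \<in> carrier_mat n m" and B: "B \<in> carrier_mat m p"
  shows "mat_l1_norm (A * B) \<le> mat_l1_norm A * mat_l1_norm B"
proof -
  have "\<bar>(A * B) $$ (i, j)\<bar> \<le> (\<Sum>k<m. \<bar>A $$ (i, k)\<bar> * \<bar>B $$ (k, j)\<bar>)" if "i < n" "j < p" for i j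
    using sum_abs[of "\<lambda>k. A $$ (i, k) * B $$ (k, j)" "{..<m}"]
    by (simp add: index_mult_mat_sum[OF A B that] abs_mult)
  then have "mat_l1_norm (A * B) \<le> (\<Sum>i<n. \<Sum>j<p. \<Sum>k<m. \<bar>A $$ (i, k)\<bar> * \<bar>B $$ (k, j)\<bar>)"
    using A B by (intro mat_l1_norm_le) auto
  also have "\<dots> = (\<Sum>i<n. \<Sum>k<m. \<bar>A $$ (i, k)\<bar> * (\<Sum>j<p. \<bar>B $$ (k, j)\<bar>))"
    by (simp add: sum_distrib_left sum.swap[of _ "{..<p}"])
  also have "\<dots> \<le> (\<Sum>i<n. \<Sum>k<m. \<bar>A $$ (i, k)\<bar> * mat_l1_norm B)"
    using B mat_l1_norm_row_le[of _ B] by (intro sum_mono mult_left_mono) auto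
  also have "\<dots> = mat_l1_norm A * mat_l1_norm B"
    using A unfolding mat_l1_norm_def by (simp add: sum_distrib_right)
  finally show ?thesis .
qed

lemma fro_norm_le_mat_l1_norm: "fro_norm A \<le> mat_l1_norm A"
proof -
  let ?I = "{..<dim_row A} \<times> {..<dim_col A}"
  have "fro_norm A = L2_set (\<lambda>(i, j). A $$ (i, j)) ?I"
    unfolding fro_norm_def L2_set_def by (simp add: sum.cartesian_product case_prod_unfold)
  also have "\<dots> \<le> (\<Sum>z\<in>?I. \<bar>(\<lambda>(i, j). A $$ (i, j)) z\<bar>)"
    by (rule L2_set_le_sum_abs)
  also have "\<dots> = mat_l1_norm A"
    unfolding mat_l1_norm_def by (simp add: sum.cartesian_product case_prod_unfold)
  finally show ?thesis .
qed

lemma sum_abs_mult_mat_vec_le: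
  assumes Y: "Y \<in> carrier_mat n n" and v: "v \<in> carrier_vec n"
  shows "(\<Sum>i<n. \<bar>(Y *\<^sub>v v) $ i\<bar>) \<le> mat_l1_norm Y * (\<Sum>k<n. \<bar>v $ k\<bar>)"
proof -
  let ?S = "\<Sum>k<n. \<bar>v $ k\<bar>"
  have "\<bar>(Y *\<^sub>v v) $ i\<bar> \<le> (\<Sum>k<n. \<bar>Y $$ (i, k)\<bar> * ?S)" if "i < n" for i
  proof -
    have "(Y *\<^sub>v v) $ i = (\<Sum>k<n. Y $$ (i, k) * v $ k)"
      using Y v that by (auto simp: scalar_prod_def atLeast0LessThan intro!: sum.cong)
    also have "\<bar>\<dots>\<bar> \<le> (\<Sum>k<n. \<bar>Y $$ (i, k)\<bar> * \<bar>v $ k\<bar>)"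
      by (rule order_trans[OF sum_abs]) (simp add: abs_mult)
    also have "\<dots> \<le> (\<Sum>k<n. \<bar>Y $$ (i, k)\<bar> * ?S)"
      by (intro sum_mono mult_left_mono member_le_sum) auto
    finally show ?thesis .
  qed
  then have "(\<Sum>i<n. \<bar>(Y *\<^sub>v v) $ i\<bar>) \<le> (\<Sum>i<n. \<Sum>k<n. \<bar>Y $$ (i, k)\<bar> * ?S)"
    by (intro sum_mono) auto
  also have "\<dots> = mat_l1_norm Y * ?S"
    using Y unfolding mat_l1_norm_def by (simp add: sum_distrib_right)
  finally show ?thesis .
qed

lemma invertible_matI:
  "A \<in> carrier_mat n n \<Longrightarrow> B \<in> carrier_mat n n \<Longrightarrow> A * B = 1\<^sub>m n \<Longrightarrow> B * A = 1\<^sub>m n \<Longrightarrow> invertible_mat A"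
  unfolding invertible_mat_def inverts_mat_def by auto

lemma minv_eqI:
  assumes A: "A \<in> carrier_mat n n" and B: "B \<in> carrier_mat n n"
    and AB: "A * B = 1\<^sub>m n" and BA: "B * A = 1\<^sub>m n"
  shows "minv A = B"
proof -
  have "A \<in> Units (ring_mat TYPE(real) n ())"
    using A B AB BA unfolding Units_def by (auto simp: ring_mat_simps)
  then obtain C where C: "mat_inverse A = Some C"
    using mat_inverse(1)[OF A] by fastforce
  then have Cc: "C \<in> carrier_mat n n" and CA: "C * A = 1\<^sub>m n"
    using mat_inverse(2)[OF A C] by auto
  have "C = C * (A * B)"
    using Cc AB by simp
  also have "\<dots> = (C * A) * B"
    using A B Cc by simp
  also have "\<dots> = B"
    using B CA by simp
  finally show ?thesis
    using C unfolding minv_def by simp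
qed

lemma invertible_mat_minv:
  assumes A: "A \<in> carrier_mat n n" and inv: "invertible_mat A"
  shows "minv A \<in> carrier_mat n n \<and> A * minv A = 1\<^sub>m n \<and> minv A * A = 1\<^sub>m n"
proof -
  obtain B where AB: "A * B = 1\<^sub>m n" and BA: "B * A = 1\<^sub>m (dim_row B)"
    using inv A unfolding invertible_mat_def inverts_mat_def by auto
  have B: "B \<in> carrier_mat n n"
    using arg_cong[OF AB, of dim_col] arg_cong[OF BA, of dim_col] A by auto
  with BA have "B * A = 1\<^sub>m n"
    by simp
  with A B AB show ?thesis
    using minv_eqI by auto
qed

lemma inverse_mult_cancel_mat:
  "Ai \<in> carrier_mat n n \<Longrightarrow> A \<in> carrier_mat n n \<Longrightarrow> C \<in> carrier_mat n m \<Longrightarrow> Ai * A = 1\<^sub>m n \<Longrightarrow>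
     Ai * (A * C) = (C :: real mat)"
  using assoc_mult_mat[of Ai n n A n C m] left_mult_one_mat[of C n m] by simp

lemma minv_mult_cancel_left:
  assumes R: "R \<in> carrier_mat n n" "invertible_mat R" and B: "B \<in> carrier_mat n n" "invertible_mat B"
    and C: "C \<in> carrier_mat n m"
  shows "invertible_mat (R * B) \<and> minv (R * B) * (R * C) = minv B * C"
proof -
  obtain Ri Bi where Ri: "Ri \<in> carrier_mat n n" "R * Ri = 1\<^sub>m n" "Ri * R = 1\<^sub>m n"
    and Bi: "Bi \<in> carrier_mat n n" "B * Bi = 1\<^sub>m n" "Bi * B = 1\<^sub>m n"
    using invertible_mat_minv[OF R] invertible_mat_minv[OF B] by blast
  have "(R * B) * (Bi * Ri) = 1\<^sub>m n"
    using R Ri B Bi by (simp add: assoc_mult_mat[of _ n n _ n _ n] inverse_mult_cancel_mat[of _ n _ _ n])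
  moreover have "(Bi * Ri) * (R * B) = 1\<^sub>m n"
    using R Ri B Bi by (simp add: assoc_mult_mat[of _ n n _ n _ n] inverse_mult_cancel_mat[of _ n _ _ n])
  ultimately have "invertible_mat (R * B)" "minv (R * B) = Bi * Ri"
    using R(1) Ri(1) B(1) Bi(1) by (auto intro: invertible_matI[of _ n "Bi * Ri"] minv_eqI[of _ n])
  moreover have "minv B = Bi"
    using B Bi by (intro minv_eqI) auto
  ultimately show ?thesis
    using R Ri B Bi C by (simp add: assoc_mult_mat[of _ n n _ n _ m] inverse_mult_cancel_mat[of _ n _ _ m])
qed

text \<open>A kernel vector of \<open>A + X\<close> is a fixed point of \<open>-A\<^sup>-\<^sup>1 X\<close>, whose entrywise
  \<open>\<ell>\<^sup>1\<close>-norm is below one.\<close>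
lemma invertible_mat_add_small:
  assumes A: "A \<in> carrier_mat n n" and X: "X \<in> carrier_mat n n" and Ai: "Ai \<in> carrier_mat n n"
    and AiA: "Ai * A = 1\<^sub>m n" and small: "mat_l1_norm Ai * mat_l1_norm X < 1"
  shows "invertible_mat (A + X)"
proof -
  have "Determinant.det (A + X) \<noteq> 0"
  proof
    assume "Determinant.det (A + X) = 0"
    then obtain v where v: "v \<in> carrier_vec n" "v \<noteq> 0\<^sub>v n" "(A + X) *\<^sub>v v = 0\<^sub>v n"
      using det_0_iff_vec_prod_zero_field[of "A + X" n] A X by auto
    define Y where "Y = Ai * X"
    have Y: "Y \<in> carrier_mat n n"
      unfolding Y_def using Ai X by simp
    have "0\<^sub>v n = Ai *\<^sub>v ((A + X) *\<^sub>v v)"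
      using v(3) Ai by (auto simp: scalar_prod_def)
    also have "\<dots> = (Ai * (A + X)) *\<^sub>v v"
      using assoc_mult_mat_vec[of Ai n n "A + X" n v] A X Ai v(1) by simp
    also have "Ai * (A + X) = 1\<^sub>m n + Y"
      using A X Ai AiA unfolding Y_def by (simp add: mult_add_distrib_mat[OF Ai A X])
    also have "(1\<^sub>m n + Y) *\<^sub>v v = v + Y *\<^sub>v v"
      using Y v(1) by (simp add: add_mult_distrib_mat_vec[of "1\<^sub>m n" n n Y v])
    finally have "(Y *\<^sub>v v) $ i = - v $ i" if "i < n" for i
      using that v Y by (auto dest!: arg_cong[of _ _ "\<lambda>x. x $ i"])
    then have "(\<Sum>k<n. \<bar>v $ k\<bar>) \<le> mat_l1_norm Y * (\<Sum>k<n. \<bar>v $ k\<bar>)"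
      using sum_abs_mult_mat_vec_le[OF Y v(1)] by simp
    also have "\<dots> \<le> (mat_l1_norm Ai * mat_l1_norm X) * (\<Sum>k<n. \<bar>v $ k\<bar>)"
      unfolding Y_def using mat_l1_norm_mult[OF Ai X] by (intro mult_right_mono) (auto intro: sum_nonneg)
    finally have "(1 - mat_l1_norm Ai * mat_l1_norm X) * (\<Sum>k<n. \<bar>v $ k\<bar>) \<le> 0"
      by (simp add: algebra_simps)
    then have "(\<Sum>k<n. \<bar>v $ k\<bar>) \<le> 0"
      using small by (auto simp: mult_le_0_iff)
    then have "(\<Sum>k<n. \<bar>v $ k\<bar>) = 0"
      by (simp add: antisym sum_nonneg)
    then have "v = 0\<^sub>v n"
      using v(1) by (intro eq_vecI) (auto simp: sum_nonneg_eq_0_iff)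
    with v(2) show False ..
  qed
  then have "A + X \<in> Units (ring_mat TYPE(real) n ())"
    using A X by (intro det_non_zero_imp_unit) auto
  then show ?thesis
    unfolding Units_def by (auto simp: ring_mat_simps intro: invertible_matI)
qed

lemma minv_add_small:
  assumes A: "A \<in> carrier_mat n n" and X: "X \<in> carrier_mat n n" and Ai: "Ai \<in> carrier_mat n n"
    and AiA: "Ai * A = 1\<^sub>m n" and small: "mat_l1_norm Ai * mat_l1_norm X \<le> 1/2"
  shows "invertible_mat (A + X) \<and> Ai = minv (A + X) + Ai * (X * minv (A + X))
    \<and> mat_l1_norm (minv (A + X)) \<le> 2 * mat_l1_norm Ai"
proof -
  have inv: "invertible_mat (A + X)"
    using small by (intro invertible_mat_add_small[OF A X Ai AiA]) simp
  define G where "G = minv (A + X)"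
  have G: "G \<in> carrier_mat n n" "(A + X) * G = 1\<^sub>m n"
    using invertible_mat_minv[OF _ inv] A X unfolding G_def by auto
  have "Ai = Ai * ((A + X) * G)"
    using Ai G by simp
  also have "\<dots> = Ai * (A * G) + Ai * (X * G)"
    using A X Ai G(1) by (simp add: add_mult_distrib_mat[OF A X G(1)] mult_add_distrib_mat[of Ai n n _ n])
  also have "Ai * (A * G) = G"
    using A Ai AiA G by (simp add: inverse_mult_cancel_mat)
  finally have Ai_eq: "Ai = G + Ai * (X * G)" .
  have "G = Ai - Ai * (X * G)"
    using Ai X G by (subst Ai_eq) (rule eq_matI; simp)
  then have "mat_l1_norm G \<le> mat_l1_norm Ai + mat_l1_norm Ai * (mat_l1_norm X * mat_l1_norm G)"
    using mat_l1_norm_diff[of Ai n n "Ai * (X * G)"] mat_l1_norm_mult[OF Ai, of "X * G" n]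
      mat_l1_norm_mult[OF X G(1)] mat_l1_norm_nonneg[of Ai] Ai X G
    by (smt (verit) mult_carrier_mat mult_left_mono)
  also have "\<dots> \<le> mat_l1_norm Ai + 1/2 * mat_l1_norm G"
    using mult_right_mono[OF small mat_l1_norm_nonneg[of G]] by (simp add: mult.assoc)
  finally show ?thesis
    using inv Ai_eq unfolding G_def by simp
qed

lemma add_diff_cancel_mat: "X \<in> carrier_mat n m \<Longrightarrow> Y \<in> carrier_mat n m \<Longrightarrow> X + (Y - X) = (Y :: real mat)"
  by (rule eq_matI) auto

lemma add_diff_add_cancel_mat:
  "X \<in> carrier_mat n m \<Longrightarrow> Y \<in> carrier_mat n m \<Longrightarrow> Z \<in> carrier_mat n m \<Longrightarrow> (Z + X) - (Z + Y) = X - (Y :: real mat)"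
  by (rule eq_matI) auto

lemma exp_diag_carrier [simp]: "exp_diag d lam t \<in> carrier_mat d d"
  unfolding exp_diag_def by simp

lemma exp_diag_mult: "exp_diag d lam s * exp_diag d lam t = exp_diag d lam (s + t)"
proof (rule eq_matI)
  fix i j
  assume "i < dim_row (exp_diag d lam (s + t))" "j < dim_col (exp_diag d lam (s + t))"
  then have ij: "i < d" "j < d"
    by (simp_all add: exp_diag_def)
  have "(exp_diag d lam s * exp_diag d lam t) $$ (i, j)
      = (\<Sum>k<d. exp_diag d lam s $$ (i, k) * exp_diag d lam t $$ (k, j))"
    by (rule index_mult_mat_sum[OF exp_diag_carrier exp_diag_carrier ij])
  also have "\<dots> = (\<Sum>k<d. if k = i then (if i = j then exp (lam (Suc i) * s) * exp (lam (Suc i) * t) else 0) else 0)"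
    using ij by (intro sum.cong) (auto simp: exp_diag_def)
  also have "\<dots> = exp_diag d lam (s + t) $$ (i, j)"
    using ij by (simp add: exp_diag_def distrib_left exp_add)
  finally show "(exp_diag d lam s * exp_diag d lam t) $$ (i, j) = exp_diag d lam (s + t) $$ (i, j)" .
qed (simp_all add: exp_diag_def)

lemma exp_diag_zero: "exp_diag d lam 0 = 1\<^sub>m d"
  by (rule eq_matI) (auto simp: exp_diag_def)

lemma invertible_exp_diag: "invertible_mat (exp_diag d lam t)"
  using exp_diag_mult[of d lam t "- t"] exp_diag_mult[of d lam "- t" t]
  by (intro invertible_matI[of _ d "exp_diag d lam (- t)"]) (auto simp: exp_diag_zero)

lemma exp_diag_conj_entry:
  assumes A: "A \<in> carrier_mat n d" and B: "B \<in> carrier_mat d m" and kj: "k < n" "j < m"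
  shows "(A * exp_diag d lam t * B) $$ (k, j) = (\<Sum>i<d. A $$ (k, i) * exp (lam (Suc i) * t) * B $$ (i, j))"
proof -
  have "(A * exp_diag d lam t) $$ (k, i) = A $$ (k, i) * exp (lam (Suc i) * t)" if "i < d" for i
  proof -
    have "(A * exp_diag d lam t) $$ (k, i) = (\<Sum>l<d. A $$ (k, l) * exp_diag d lam t $$ (l, i))"
      by (rule index_mult_mat_sum[OF A exp_diag_carrier kj(1) that])
    also have "\<dots> = (\<Sum>l<d. if l = i then A $$ (k, l) * exp (lam (Suc i) * t) else 0)"
      using that by (intro sum.cong) (auto simp: exp_diag_def)
    finally show ?thesis
      using that by simp
  qed
  then show ?thesis
    by (subst index_mult_mat_sum[OF mult_carrier_mat[OF A exp_diag_carrier] B kj]) simp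
qed

lemma mat_l1_norm_exp_diag_le:
  assumes "\<And>i. i < d \<Longrightarrow> lam (Suc i) * t \<le> c"
  shows "mat_l1_norm (exp_diag d lam t) \<le> real d * real d * exp c"
proof -
  have "mat_l1_norm (exp_diag d lam t) \<le> (\<Sum>i<d. \<Sum>j<d. exp c)"
    using assms by (intro mat_l1_norm_le[OF exp_diag_carrier]) (auto simp: exp_diag_def)
  then show ?thesis
    by simp
qed

lemma mat_factor_perturbation:
  fixes P R Ri E Ei T :: "real mat"
  assumes P: "P \<in> carrier_mat n n" and R: "R \<in> carrier_mat n n" and Ri: "Ri \<in> carrier_mat n n"
    and E: "E \<in> carrier_mat n n" and Ei: "Ei \<in> carrier_mat n n" and T: "T \<in> carrier_mat n n"
    and RRi: "R * Ri = 1\<^sub>m n" and EEi: "E * Ei = 1\<^sub>m n"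
  shows "P = R * (E * (T + Ei * (Ri * (P - R * E * T))))"
proof -
  define D where "D = P - R * E * T"
  have D: "D \<in> carrier_mat n n"
    unfolding D_def using P R E T by (simp add: minus_carrier_mat)
  have "R * (E * (T + Ei * (Ri * D))) = R * (E * T) + R * (E * (Ei * (Ri * D)))"
    using R E Ei Ri T D by (simp add: mult_add_distrib_mat[of _ n n _ n])
  also have "R * (E * (Ei * (Ri * D))) = D"
    using R E Ei Ri D RRi EEi mult_carrier_mat[OF Ri D]
    by (simp add: inverse_mult_cancel_mat[of E n Ei "Ri * D" n] inverse_mult_cancel_mat[of R n Ri D n])
  also have "R * (E * T) + D = P"
    unfolding D_def using P R E T by (simp add: add_diff_cancel_mat[of _ n n])
  finally show ?thesis
    unfolding D_def ..
qed

lemma conj_perturbation_bound: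
  assumes T: "T \<in> carrier_mat n n" and Ti: "Ti \<in> carrier_mat n n" and E: "E \<in> carrier_mat n n"
    and F: "F \<in> carrier_mat n n" and F': "F' \<in> carrier_mat n n"
    and TiT: "Ti * T = 1\<^sub>m n" and small: "mat_l1_norm Ti * mat_l1_norm F \<le> 1/2"
  shows "invertible_mat (T + F) \<and>
    mat_l1_norm (Ti * E * T - minv (T + F) * (E * (T + F')))
      \<le> 2 * mat_l1_norm Ti * mat_l1_norm E * (mat_l1_norm Ti * mat_l1_norm T * mat_l1_norm F + mat_l1_norm F')"
proof -
  define G where "G = minv (T + F)"
  have inv: "invertible_mat (T + F)" and Ti_eq: "Ti = G + Ti * (F * G)"
    and G_bound: "mat_l1_norm G \<le> 2 * mat_l1_norm Ti"
    using minv_add_small[OF T F Ti TiT small] unfolding G_def by auto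
  have G: "G \<in> carrier_mat n n"
    using invertible_mat_minv[OF _ inv] T F unfolding G_def by auto
  define X where "X = Ti * (F * (G * (E * T)))"
  define Y where "Y = G * (E * F')"
  define Z where "Z = G * (E * T)"
  have "Ti * E * T = Z + X"
    unfolding X_def Z_def using T Ti E F G
    by (subst Ti_eq) (simp add: assoc_mult_mat[of _ n n _ n _ n] add_mult_distrib_mat[of _ n n _ _ n])
  moreover have "G * (E * (T + F')) = Z + Y"
    unfolding Y_def Z_def using T E F' G by (simp add: mult_add_distrib_mat[of _ n n _ n])
  ultimately have diff: "Ti * E * T - G * (E * (T + F')) = X - Y"
    unfolding X_def Y_def Z_def using T Ti E F F' G by (simp add: add_diff_add_cancel_mat[of _ n n])
  let ?n = mat_l1_norm
  have "?n X \<le> ?n Ti * (?n F * (?n G * (?n E * ?n T)))"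
    unfolding X_def using T Ti E F G mat_l1_norm_nonneg
    by (meson mat_l1_norm_mult mult_carrier_mat mult_left_mono order_trans)
  moreover have "?n Y \<le> ?n G * (?n E * ?n F')"
    unfolding Y_def using E F' G mat_l1_norm_nonneg
    by (meson mat_l1_norm_mult mult_carrier_mat mult_left_mono order_trans)
  ultimately have "?n (X - Y) \<le> ?n G * (?n Ti * ?n T * ?n F * ?n E + ?n E * ?n F')"
    using mat_l1_norm_diff[of X n n Y] T Ti E F F' G unfolding X_def Y_def
    by (simp add: algebra_simps)
  also have "\<dots> \<le> 2 * ?n Ti * (?n Ti * ?n T * ?n F * ?n E + ?n E * ?n F')"
    using G_bound mat_l1_norm_nonneg by (intro mult_right_mono) auto
  finally show ?thesis
    using inv diff unfolding G_def by (simp add: algebra_simps)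
qed

lemma exp_decay_eventually_le:
  fixes a c M :: real
  assumes a: "a < 0" and c: "c > 0"
  shows "\<exists>t0\<ge>0. \<forall>t>t0. M * exp (a * t) \<le> c"
proof -
  define t0 where "t0 = ln (\<bar>M\<bar> / c + 1) / - a"
  have "M * exp (a * t) \<le> c" if "t > t0" for t
  proof -
    have "a * t \<le> a * t0"
      using that a by (intro mult_left_mono_neg) auto
    also have "a * t0 = - ln (\<bar>M\<bar> / c + 1)"
      unfolding t0_def using a by simp
    finally have "a * t \<le> - ln (\<bar>M\<bar> / c + 1)" .
    then have "exp (a * t) \<le> exp (- ln (\<bar>M\<bar> / c + 1))"
      by simp
    also have "\<dots> = 1 / (\<bar>M\<bar> / c + 1)"
      using c by (simp add: exp_minus inverse_eq_divide add_nonneg_pos)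
    finally have "exp (a * t) \<le> 1 / (\<bar>M\<bar> / c + 1)" .
    then have "M * exp (a * t) \<le> \<bar>M\<bar> * (1 / (\<bar>M\<bar> / c + 1))"
      by (meson abs_ge_self abs_ge_zero exp_ge_zero mult_mono order_trans)
    also have "\<dots> \<le> c"
      using c by (simp add: field_simps)
    finally show ?thesis .
  qed
  moreover have "t0 \<ge> 0"
    unfolding t0_def using a c by (intro divide_nonneg_pos ln_ge_zero) auto
  ultimately show ?thesis
    by blast
qed

lemma perturbation_decay:
  fixes D Ri :: "real mat"
  assumes Ri: "Ri \<in> carrier_mat d d" and D: "D \<in> carrier_mat d d" and t: "t \<ge> 0"
    and lam_d_le: "\<And>i. i < d \<Longrightarrow> lam d \<le> lam (Suc i)"
    and D_bound: "mat_l1_norm D \<le> K * exp (lam (Suc d) * t)"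
  shows "mat_l1_norm (exp_diag d lam (- t) * (Ri * D))
           \<le> real d * real d * mat_l1_norm Ri * K * exp ((lam (Suc d) - lam d) * t)"
proof -
  have "lam (Suc i) * - t \<le> - lam d * t" if "i < d" for i
    using mult_right_mono[OF lam_d_le[OF that] t] by simp
  then have E: "mat_l1_norm (exp_diag d lam (- t)) \<le> real d * real d * exp (- lam d * t)"
    by (rule mat_l1_norm_exp_diag_le)
  have "mat_l1_norm (exp_diag d lam (- t) * (Ri * D))
      \<le> mat_l1_norm (exp_diag d lam (- t)) * (mat_l1_norm Ri * mat_l1_norm D)"
    using mat_l1_norm_mult[OF exp_diag_carrier mult_carrier_mat[OF Ri D]] mat_l1_norm_mult[OF Ri D]
      mat_l1_norm_nonneg
    by (meson mult_left_mono order_trans)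
  also have "\<dots> \<le> (real d * real d * exp (- lam d * t)) * (mat_l1_norm Ri * (K * exp (lam (Suc d) * t)))"
    using E D_bound mat_l1_norm_nonneg by (intro mult_mono mult_left_mono) auto
  also have "\<dots> = real d * real d * mat_l1_norm Ri * K * exp ((lam (Suc d) - lam d) * t)"
    by (simp add: algebra_simps flip: exp_add)
  finally show ?thesis .
qed

lemma skip_quotient_error:
  fixes R E Ed T Ti F F' :: "real mat"
  assumes R: "R \<in> carrier_mat n n" "invertible_mat R" and E: "E \<in> carrier_mat n n" "invertible_mat E"
    and Ed: "Ed \<in> carrier_mat n n" and T: "T \<in> carrier_mat n n" and Ti: "Ti \<in> carrier_mat n n"
    and F: "F \<in> carrier_mat n n" and F': "F' \<in> carrier_mat n n"
    and TiT: "Ti * T = 1\<^sub>m n" and small: "mat_l1_norm Ti * mat_l1_norm F \<le> 1/2"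
  shows "invertible_mat (R * (E * (T + F))) \<and>
    mat_l1_norm (Ti * Ed * T - minv (R * (E * (T + F))) * (R * (E * (Ed * (T + F')))))
      \<le> 2 * mat_l1_norm Ti * mat_l1_norm Ed * (mat_l1_norm Ti * mat_l1_norm T * mat_l1_norm F + mat_l1_norm F')"
proof -
  have TF: "T + F \<in> carrier_mat n n" and C: "Ed * (T + F') \<in> carrier_mat n n"
    using T F F' Ed by auto
  note bound = conj_perturbation_bound[OF T Ti Ed F F' TiT small]
  have "invertible_mat (E * (T + F)) \<and>
      minv (E * (T + F)) * (E * (Ed * (T + F'))) = minv (T + F) * (Ed * (T + F'))"
    using bound by (intro minv_mult_cancel_left[OF E TF _ C]) simp
  moreover have "invertible_mat (R * (E * (T + F))) \<and>
      minv (R * (E * (T + F))) * (R * (E * (Ed * (T + F')))) = minv (E * (T + F)) * (E * (Ed * (T + F')))"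
    if "invertible_mat (E * (T + F))"
    using E TF C by (intro minv_mult_cancel_left[OF R _ that]) auto
  ultimately show ?thesis
    using bound by simp
qed

lemma propagator_perturbation_form:
  fixes P :: "real \<Rightarrow> real mat" and T R :: "real mat" and lam :: "nat \<Rightarrow> real"
  assumes T: "T \<in> carrier_mat d d" and R: "R \<in> carrier_mat d d" "invertible_mat R"
    and P: "\<And>t. P t \<in> carrier_mat d d" and lam_d_le: "\<And>i. i < d \<Longrightarrow> lam d \<le> lam (Suc i)"
    and approx: "\<And>t. t \<ge> 0 \<Longrightarrow> mat_l1_norm (P t - R * exp_diag d lam t * T) \<le> K * exp (lam (Suc d) * t)"
  shows "\<exists>F K1. (\<forall>t. F t \<in> carrier_mat d d \<and> P t = R * (exp_diag d lam t * (T + F t))) \<and> K1 \<ge> 0 \<and>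
           (\<forall>t\<ge>0. mat_l1_norm (F t) \<le> K1 * exp ((lam (Suc d) - lam d) * t))"
proof -
  let ?E = "exp_diag d lam"
  define Ri where "Ri = minv R"
  have Ri: "Ri \<in> carrier_mat d d" "R * Ri = 1\<^sub>m d"
    using invertible_mat_minv[OF R] unfolding Ri_def by auto
  define F where "F t = ?E (- t) * (Ri * (P t - R * ?E t * T))" for t
  define K1 where "K1 = real d * real d * mat_l1_norm Ri * K"
  have F: "F t \<in> carrier_mat d d" for t
    unfolding F_def using P R(1) T Ri(1)
    by (intro mult_carrier_mat[OF exp_diag_carrier] mult_carrier_mat[OF Ri(1)] minus_carrier_mat
        mult_carrier_mat[OF mult_carrier_mat[OF R(1) exp_diag_carrier] T])
  have factor: "P t = R * (?E t * (T + F t))" for t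
    unfolding F_def using P R(1) Ri T exp_diag_mult[of d lam t "- t"]
    by (intro mat_factor_perturbation) (auto simp: exp_diag_zero)
  have F_bound: "mat_l1_norm (F t) \<le> K1 * exp ((lam (Suc d) - lam d) * t)" if "t \<ge> 0" for t
    unfolding F_def K1_def using P R(1) T Ri(1) that lam_d_le approx[OF that]
    by (intro perturbation_decay) (auto simp: minus_carrier_mat)
  have "K1 \<ge> 0"
    using F_bound[of 0] mat_l1_norm_nonneg[of "F 0"] by simp
  with F factor F_bound show ?thesis
    by blast
qed

theorem skip_propagator_error:
  fixes P :: "real \<Rightarrow> real mat" and T R :: "real mat" and lam :: "nat \<Rightarrow> real"
  assumes T: "T \<in> carrier_mat d d" "invertible_mat T" and R: "R \<in> carrier_mat d d" "invertible_mat R"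
    and P: "\<And>t. P t \<in> carrier_mat d d"
    and gap: "lam (Suc d) < lam d" and lam_d_le: "\<And>i. i < d \<Longrightarrow> lam d \<le> lam (Suc i)"
    and \<delta>: "\<delta> \<ge> 0"
    and approx: "\<And>t. t \<ge> 0 \<Longrightarrow> mat_l1_norm (P t - R * exp_diag d lam t * T) \<le> K * exp (lam (Suc d) * t)"
  shows "\<exists>t0\<ge>0. \<exists>C>0. \<forall>ts>t0. invertible_mat (P ts) \<and>
           fro_norm (minv T * exp_diag d lam \<delta> * T - minv (P ts) * P (ts + \<delta>))
             \<le> C * exp ((lam (Suc d) - lam d) * ts)"
proof -
  let ?E = "exp_diag d lam" and ?n = mat_l1_norm
  define eps where "eps t = exp ((lam (Suc d) - lam d) * t)" for t
  obtain F K1 where F: "\<And>t. F t \<in> carrier_mat d d" and factor: "\<And>t. P t = R * (?E t * (T + F t))"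
    and K1: "K1 \<ge> 0" and F_bound: "\<And>t. t \<ge> 0 \<Longrightarrow> ?n (F t) \<le> K1 * eps t"
    using propagator_perturbation_form[OF T(1) R P lam_d_le approx] unfolding eps_def by blast
  define Ti where "Ti = minv T"
  have Ti: "Ti \<in> carrier_mat d d" "Ti * T = 1\<^sub>m d"
    using invertible_mat_minv[OF T] unfolding Ti_def by auto
  obtain t0 where t0: "t0 \<ge> 0" "\<And>t. t > t0 \<Longrightarrow> ?n Ti * (K1 * eps t) \<le> 1/2"
    using exp_decay_eventually_le[of "lam (Suc d) - lam d" "1/2" "?n Ti * K1"] gap
    unfolding eps_def by (auto simp: mult.assoc)
  define C where "C = 2 * ?n Ti * ?n (?E \<delta>) * (?n Ti * ?n T * K1 + K1) + 1"
  have "invertible_mat (P ts) \<and> fro_norm (Ti * ?E \<delta> * T - minv (P ts) * P (ts + \<delta>)) \<le> C * eps ts"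
    if ts: "ts > t0" for ts
  proof -
    have F_ts: "?n (F ts) \<le> K1 * eps ts"
      using F_bound ts t0(1) by simp
    have "eps (ts + \<delta>) \<le> eps ts"
      unfolding eps_def using gap \<delta> by (simp add: distrib_left mult_nonpos_nonneg)
    then have F_skip: "?n (F (ts + \<delta>)) \<le> K1 * eps ts"
      using F_bound[of "ts + \<delta>"] ts t0(1) \<delta> K1 by (meson add_nonneg_nonneg less_imp_le mult_left_mono order_trans)
    have small: "?n Ti * ?n (F ts) \<le> 1/2"
      using F_ts t0(2)[OF ts] mat_l1_norm_nonneg[of Ti] by (meson mult_left_mono order_trans)
    have "P (ts + \<delta>) = R * (?E ts * (?E \<delta> * (T + F (ts + \<delta>))))"
      using factor[of "ts + \<delta>"] T(1) F
      by (simp add: assoc_mult_mat[of _ d d _ d _ d] flip: exp_diag_mult)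
    with skip_quotient_error[where E="exp_diag d lam ts" and Ed="exp_diag d lam \<delta>" and F="F ts"
        and F'="F (ts + \<delta>)", OF R exp_diag_carrier invertible_exp_diag exp_diag_carrier T(1) Ti(1) F F Ti(2) small]
    have "invertible_mat (P ts) \<and> ?n (Ti * ?E \<delta> * T - minv (P ts) * P (ts + \<delta>))
        \<le> 2 * ?n Ti * ?n (?E \<delta>) * (?n Ti * ?n T * ?n (F ts) + ?n (F (ts + \<delta>)))"
      by (simp flip: factor)
    moreover have "2 * ?n Ti * ?n (?E \<delta>) * (?n Ti * ?n T * ?n (F ts) + ?n (F (ts + \<delta>)))
        \<le> 2 * ?n Ti * ?n (?E \<delta>) * (?n Ti * ?n T * (K1 * eps ts) + K1 * eps ts)"
      using F_ts F_skip mat_l1_norm_nonneg by (intro mult_left_mono add_mono) auto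
    moreover have "\<dots> \<le> C * eps ts"
      unfolding C_def eps_def by (simp add: algebra_simps)
    ultimately show ?thesis
      using fro_norm_le_mat_l1_norm by (meson order_trans)
  qed
  moreover have "C > 0"
    unfolding C_def using K1 mat_l1_norm_nonneg
    by (intro add_nonneg_pos mult_nonneg_nonneg add_nonneg_nonneg) auto
  ultimately show ?thesis
    using t0(1) unfolding eps_def Ti_def by blast
qed

lemma antitone_of_Suc_less:
  fixes f :: "nat \<Rightarrow> real"
  assumes dec: "\<And>i. i \<ge> m \<Longrightarrow> f (Suc i) < f i" and "m \<le> i" "i \<le> j"
  shows "f j \<le> f i"
  using \<open>i \<le> j\<close>
proof (induction j rule: dec_induct)
  case (step k)
  then show ?case
    using dec[of k] \<open>m \<le> i\<close> by simp
qed simp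

lemma (in orthonormal_family) P_lin_spectral_approx:
  assumes rho: "\<And>j. j \<in> {1..d} \<Longrightarrow> L2 (rho j)"
    and lam_antitone: "\<And>i j. 1 \<le> i \<Longrightarrow> i \<le> j \<Longrightarrow> lam j \<le> lam i"
    and lam_nonpos: "\<And>i. i \<ge> 1 \<Longrightarrow> lam i \<le> 0"
  shows "\<exists>K. \<forall>t\<ge>0. mat_l1_norm (P_lin d mu nu phi lam rho t - R_mat d phi * exp_diag d lam t * T_lin d mu nu phi rho)
           \<le> K * exp (lam (Suc d) * t)"
proof -
  define g where "g k = (\<lambda>Q. Q^k * w Q)" for k
  define b where "b k j = (ip (rho (Suc j)) (rho (Suc j)) + ip (g k) (g k)) / 2" for k j
  let ?RET = "\<lambda>t. R_mat d phi * exp_diag d lam t * T_lin d mu nu phi rho"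
  have RET: "?RET t \<in> carrier_mat d d" for t
    by (intro mult_carrier_mat[of _ d d _ d] exp_diag_carrier) (simp_all add: R_mat_def T_lin_def)
  have entry: "\<bar>(P_lin d mu nu phi lam rho t - ?RET t) $$ (k, j)\<bar> \<le> b k j * exp (lam (Suc d) * t)"
    if t: "t \<ge> 0" and kj: "k < d" "j < d" for t k j
  proof -
    have "?RET t $$ (k, j) = (\<Sum>i<d. ip (g k) (phi (Suc i)) * exp (lam (Suc i) * t) * ip (phi (Suc i)) (rho (Suc j)))"
      using kj by (subst exp_diag_conj_entry[of _ d d _ d]) (auto simp: R_mat_def T_lin_def g_def ip_moment_weight)
    also have "\<dots> = (\<Sum>i\<in>{1..d}. exp (lam i * t) * ip (phi i) (rho (Suc j)) * ip (g k) (phi i))"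
      by (simp add: sum.atLeast1_atMost_eq mult_ac)
    finally have "(P_lin d mu nu phi lam rho t - ?RET t) $$ (k, j) = ip (g k) (semigroup mu nu phi lam t (rho (Suc j)))
        - (\<Sum>i\<in>{1..d}. exp (lam i * t) * ip (phi i) (rho (Suc j)) * ip (g k) (phi i))"
      using kj carrier_matD[OF RET[of t]] by (simp add: P_lin_def g_def ip_moment_weight)
    then show ?thesis
      using semigroup_spectral_tail[OF rho[of "Suc j"] moment_weight_L2[of k] t lam_antitone lam_nonpos, where d=d] kj
      unfolding b_def g_def by simp
  qed
  show ?thesis
  proof (intro exI allI impI)
    fix t :: real
    assume "t \<ge> 0"
    then have "mat_l1_norm (P_lin d mu nu phi lam rho t - ?RET t) \<le> (\<Sum>k<d. \<Sum>j<d. b k j * exp (lam (Suc d) * t))"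
      using RET entry by (intro mat_l1_norm_le[of _ d d]) (auto simp: minus_carrier_mat)
    then show "mat_l1_norm (P_lin d mu nu phi lam rho t - ?RET t) \<le> (\<Sum>k<d. \<Sum>j<d. b k j) * exp (lam (Suc d) * t)"
      by (simp add: sum_distrib_right)
  qed
qed

theorem mainTheorem2:
  fixes d :: nat and mu nu :: real
    and phi :: "nat \<Rightarrow> real \<Rightarrow> real" and lam :: "nat \<Rightarrow> real"
    and rho :: "nat \<Rightarrow> real \<Rightarrow> real" and \<delta> :: real
  assumes d: "d \<ge> 1"
    and lam1: "lam 1 = 0"
    and lam_dec: "\<And>i. i \<ge> 1 \<Longrightarrow> lam (Suc i) < lam i"
    and eig_H2: "\<And>i. i \<ge> 1 \<Longrightarrow> H2_1 mu nu (phi i)"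
    and eig_eq: "\<And>i Q. i \<ge> 1 \<Longrightarrow> FP_op mu nu (phi i) Q = lam i * phi i Q"
    and orthonormal: "\<And>i j. i \<ge> 1 \<Longrightarrow> j \<ge> 1 \<Longrightarrow>
        ip1 mu nu (phi i) (phi j) = (if i = j then 1 else 0)"
    and complete: "\<And>u. L2_1 mu nu u \<Longrightarrow>
        (\<lambda>N. norm1 mu nu (\<lambda>Q. u Q - (\<Sum>i\<in>{1..N}. ip1 mu nu (phi i) u * phi i Q))) \<longlonglongrightarrow> 0"
    and rho_L2: "\<And>j. j \<in> {1..d} \<Longrightarrow> L2_1 mu nu (rho j)"
    and rho_mass: "\<And>j. j \<in> {1..d} \<Longrightarrow> (LINT Q|lborel. rho j Q) = 1"
    and T_inv: "invertible_mat (T_lin d mu nu phi rho)"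
    and R_inv: "invertible_mat (R_mat d phi)"
    and \<delta>: "\<delta> \<ge> 0"
  shows "\<exists>t0 \<ge> 0. \<exists>C > 0. \<forall>ts > t0.
           invertible_mat (P_lin d mu nu phi lam rho ts) \<and>
           fro_norm (Phi_star d mu nu phi lam rho \<delta> - Phi_skip d mu nu phi lam rho ts \<delta>)
             \<le> C * exp ((lam (d + 1) - lam d) * ts)"
proof -
  \<comment> \<open>Only orthonormality (through Bessel's inequality) and the spectral gap enter.\<close>
  interpret orthonormal_family mu nu phi
    using eig_H2 orthonormal by unfold_locales (auto simp: H2_1_def)
  have lam_antitone: "lam j \<le> lam i" if "1 \<le> i" "i \<le> j" for i j
    using lam_dec that by (rule antitone_of_Suc_less)
  have lam_nonpos: "lam i \<le> 0" if "i \<ge> 1" for i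
    using lam_antitone[OF order_refl that] lam1 by simp
  obtain K where "\<forall>t\<ge>0. mat_l1_norm (P_lin d mu nu phi lam rho t
      - R_mat d phi * exp_diag d lam t * T_lin d mu nu phi rho) \<le> K * exp (lam (Suc d) * t)"
    using P_lin_spectral_approx[where d=d and rho=rho and lam=lam, OF rho_L2 lam_antitone lam_nonpos] by blast
  then have "\<exists>t0\<ge>0. \<exists>C>0. \<forall>ts>t0. invertible_mat (P_lin d mu nu phi lam rho ts) \<and>
      fro_norm (minv (T_lin d mu nu phi rho) * exp_diag d lam \<delta> * T_lin d mu nu phi rho
        - minv (P_lin d mu nu phi lam rho ts) * P_lin d mu nu phi lam rho (ts + \<delta>))
      \<le> C * exp ((lam (Suc d) - lam d) * ts)"
    using T_inv R_inv \<delta> lam_dec[OF d] lam_antitone[of "Suc _" d] d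
    by (intro skip_propagator_error[where P="P_lin d mu nu phi lam rho" and T="T_lin d mu nu phi rho"
          and R="R_mat d phi" and K=K])
      (auto simp: T_lin_def R_mat_def P_lin_def)
  then show ?thesis
    unfolding Phi_star_def Phi_skip_def by simp
qed

end
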